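(* Let $A$ satisfy the spectral assumption, let $P_1=Q_1\in\mathbb{R}^{n\times k}$ have orthonormal columns spanning $E_{\mathrm u}$, and suppose $E_{\mathrm u}^\perp$ and $E_{\mathrm s}$ are $\xi$-close for some $\xi\in(0,1)$. Then one can choose $P_2\in\mathbb{R}^{n\times(n-k)}$ with orthonormal columns spanning $E_{\mathrm u}^\perp$ and $Q_2\in\mathbb{R}^{n\times(n-k)}$ with orthonormal columns spanning $E_{\mathrm s}$ such that, with the notation below, (1) $\sigma_{\min}(P_2^\top Q_2)\ge 1-\xi$, $\|P_1^\top Q_2\|\le\sqrt{2\xi}$, $\|P_2-Q_2\|\le\sqrt{2\xi}$; (2) $\|R_2\|\le\frac{1}{1-\xi}$ and $\|N_2\|\le\frac{1}{1-\xi}\|A\|$; (3) $\|P_1^\top-R_1\|\le\frac{\sqrt{2\xi}}{1-\xi}$ and $\|R_1\|\le 1+\frac{\sqrt{2\xi}}{1-\xi}$; (4) $\|\Delta\|\le\frac{2-\xi}{1-\xi}\sqrt{2\xi}\,\|A\|$.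
   Context: Spectral assumption: $A\in\mathbb{R}^{n\times n}$ is diagonalizable with eigenvalues $|\lambda_1|>|\lambda_2|\ge\cdots\ge|\lambda_k|>1>|\lambda_{k+1}|\ge\cdots\ge|\lambda_n|$. $E_{\mathrm u}$ (resp. $E_{\mathrm s}$) is the real $A$-invariant subspace spanned by the real eigenvectors and the real and imaginary parts of complex eigenvectors associated with $\lambda_1,\dots,\lambda_k$ (resp. $\lambda_{k+1},\dots,\lambda_n$); $\mathbb{R}^n=E_{\mathrm u}\oplus E_{\mathrm s}$. Given orthonormal-column matrices $P_1$ (basis of $E_{\mathrm u}$), $P_2$ (basis of $E_{\mathrm u}^\perp$), $P=[P_1\ P_2]$, define $M=P^\top AP=\begin{bmatrix}M_1&\Delta\\0&M_2\end{bmatrix}$. With $Q_1=P_1$, $Q_2$ an orthonormal basis of $E_{\mathrm s}$, $Q=[Q_1\ Q_2]$, write $Q^{-1}=\begin{bmatrix}R_1\\R_2\end{bmatrix}$ ($R_1\in\mathbb{R}^{k\times n}$), so that $Q^{-1}AQ=\mathrm{diag}(N_1,N_2)$ with $N_1=M_1$. Definition ($\xi$-close): for $\xi\in(0,1]$, $E_{\mathrm u}^\perp=\mathrm{col}(P_2)$ and $E_{\mathrm s}=\mathrm{col}(Q_2)$ are $\xi$-close iff $\sigma_{\min}(P_2^\top Q_2)>1-\xi$ (independent of the choice of orthonormal bases). $\|\cdot\|$ is the spectral norm. *)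

theory Defs
  imports Complex_Main "Jordan_Normal_Form.Matrix" "Jordan_Normal_Form.Char_Poly"
begin

definition vnorm :: "real vec \<Rightarrow> real" where
  "vnorm v = sqrt (v \<bullet> v)"

definition op_norm :: "real mat \<Rightarrow> real" where
  "op_norm M = Sup {vnorm (M *\<^sub>v v) | v. v \<in> carrier_vec (dim_col M) \<and> vnorm v \<le> 1}"

definition sigma_min :: "real mat \<Rightarrow> real" where
  "sigma_min M = Inf {vnorm (M *\<^sub>v v) | v. v \<in> carrier_vec (dim_col M) \<and> vnorm v = 1}"

definition real_span :: "nat \<Rightarrow> real vec set \<Rightarrow> real vec set" where
  "real_span n G = {x. \<exists>cs :: (real \<times> real vec) list. set (map snd cs) \<subseteq> G \<and>
      x = foldr (\<lambda>(c, v) acc. c \<cdot>\<^sub>v v + acc) cs (0\<^sub>v n)}"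

definition eig_real_space :: "(complex \<Rightarrow> bool) \<Rightarrow> real mat \<Rightarrow> real vec set" where
  "eig_real_space P A = real_span (dim_row A)
     ({map_vec Re v | v l. eigenvector (map_mat complex_of_real A) v l \<and> P l} \<union>
      {map_vec Im v | v l. eigenvector (map_mat complex_of_real A) v l \<and> P l})"

definition unstable_space :: "real mat \<Rightarrow> real vec set" where
  "unstable_space A = eig_real_space (\<lambda>l. cmod l > 1) A"

definition stable_space :: "real mat \<Rightarrow> real vec set" where
  "stable_space A = eig_real_space (\<lambda>l. cmod l < 1) A"

definition orth_compl :: "nat \<Rightarrow> real vec set \<Rightarrow> real vec set" where
  "orth_compl n U = {x \<in> carrier_vec n. \<forall>y\<in>U. x \<bullet> y = 0}"

definition onb_cols :: "nat \<Rightarrow> nat \<Rightarrow> real mat \<Rightarrow> real vec set \<Rightarrow> bool" where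
  "onb_cols n d P U \<longleftrightarrow> P \<in> carrier_mat n d \<and> transpose_mat P * P = 1\<^sub>m d \<and>
      {P *\<^sub>v v | v. v \<in> carrier_vec d} = U"

text \<open>xi-closeness of two subspaces of R^n (via some choice of orthonormal bases; the
  value is independent of the choice).\<close>
definition xi_close :: "nat \<Rightarrow> real vec set \<Rightarrow> real vec set \<Rightarrow> real \<Rightarrow> bool" where
  "xi_close n U V \<xi> \<longleftrightarrow> (\<exists>d P Q. onb_cols n d P U \<and> onb_cols n d Q V \<and>
      sigma_min (transpose_mat P * Q) > 1 - \<xi>)"

definition hcat :: "'a mat \<Rightarrow> 'a mat \<Rightarrow> 'a mat" where
  "hcat P1 P2 = mat (dim_row P1) (dim_col P1 + dim_col P2)
     (\<lambda>(i, j). if j < dim_col P1 then P1 $$ (i, j) else P2 $$ (i, j - dim_col P1))"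

end

(*
  Take orthonormal bases P2 of the orthogonal complement of the unstable
  space and Q of the stable space with sigma_min (P2^T Q) > 1 - xi, and rotate Q by the orthogonal
  factor W of the polar decomposition P2^T Q = W H: for Q2 = Q W^T the matrix T = P2^T Q2 = W H W^T
  is symmetric with T >= (1 - xi) I. Then |P2 v - Q2 v|^2 = 2|v|^2 - 2 v.Tv <= 2 xi |v|^2 and
  |P1^T Q2 v|^2 = |v|^2 - |Tv|^2 <= (1 - (1 - xi)^2) |v|^2 <= 2 xi |v|^2. The inverse of [P1 Q2] has
  the row blocks R1 = P1^T - P1^T Q2 T^-1 P2^T and R2 = T^-1 P2^T with |T^-1| <= 1/(1 - xi), and
  invariance gives A Q2 = Q2 N2, so Delta = P1^T A P2 = P1^T A (P2 - Q2) + P1^T Q2 N2. All bounds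
  then follow from submultiplicativity and the triangle inequality.
*)
theory Submission
  imports Defs
begin

section \<open>Euclidean norm and operator norm\<close>

lemma scalar_prod_self_eq_sum: "(x::real vec) \<bullet> x = (\<Sum>i<dim_vec x. (x$i)^2)"
  unfolding scalar_prod_def by (auto simp: power2_eq_square intro!: sum.cong)

lemma scalar_prod_self_nonneg: "0 \<le> (x::real vec) \<bullet> x"
  unfolding scalar_prod_self_eq_sum by (auto intro: sum_nonneg)

lemma scalar_prod_self_pos:
  assumes "i < dim_vec (x::real vec)" "x $ i \<noteq> 0"
  shows "0 < x \<bullet> x"
proof -
  have "(x$i)^2 \<le> (\<Sum>i<dim_vec x. (x$i)^2)"
    by (rule member_le_sum) (use assms in auto)
  moreover have "0 < (x$i)^2" using assms by auto
  ultimately show ?thesis unfolding scalar_prod_self_eq_sum by linarith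
qed

lemma vnorm_nonneg: "0 \<le> vnorm v"
  unfolding vnorm_def using scalar_prod_self_nonneg[of v] by simp

lemma vnorm_square: "(vnorm v)^2 = v \<bullet> v"
  unfolding vnorm_def using scalar_prod_self_nonneg[of v] by simp

lemma vnorm_zero_vec: "vnorm (0\<^sub>v n) = 0"
  unfolding vnorm_def by simp

lemma vnorm_unit_vec: "i < n \<Longrightarrow> vnorm (unit_vec n i :: real vec) = 1"
  unfolding vnorm_def by simp

lemma vnorm_smult: "vnorm (c \<cdot>\<^sub>v v) = \<bar>c\<bar> * vnorm v"
proof -
  have "(c \<cdot>\<^sub>v v) \<bullet> (c \<cdot>\<^sub>v v) = c^2 * (v \<bullet> v)"
    unfolding scalar_prod_self_eq_sum by (simp add: power_mult_distrib sum_distrib_left)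
  thus ?thesis unfolding vnorm_def by (simp add: real_sqrt_mult)
qed

lemma vnorm_eq_0_imp_zero:
  assumes "v \<in> carrier_vec n" "vnorm v = 0"
  shows "v = 0\<^sub>v n"
proof (rule eq_vecI)
  fix i assume "i < dim_vec (0\<^sub>v n :: real vec)"
  thus "v $ i = 0\<^sub>v n $ i"
    using assms scalar_prod_self_pos[of i v] vnorm_square[of v] by fastforce
qed (use assms in auto)

lemma cauchy_schwarz_square:
  assumes v: "(v::real vec) \<in> carrier_vec n" and w: "w \<in> carrier_vec n"
  shows "(v \<bullet> w)^2 \<le> (v \<bullet> v) * (w \<bullet> w)"
proof (cases "w \<bullet> w = 0")
  case True
  hence "w = 0\<^sub>v n" using vnorm_eq_0_imp_zero[OF w] unfolding vnorm_def by simp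
  thus ?thesis using v by simp
next
  case False
  hence pos: "w \<bullet> w > 0" using scalar_prod_self_nonneg[of w] by simp
  define t where "t = (v \<bullet> w) / (w \<bullet> w)"
  have "0 \<le> (v - t \<cdot>\<^sub>v w) \<bullet> (v - t \<cdot>\<^sub>v w)" by (rule scalar_prod_self_nonneg)
  also have "\<dots> = v \<bullet> v - 2 * t * (v \<bullet> w) + t^2 * (w \<bullet> w)"
    using v w by (simp add: minus_scalar_prod_distrib[of _ n] scalar_prod_minus_distrib[of _ n]
        comm_scalar_prod[of w n v] power2_eq_square algebra_simps)
  also have "\<dots> = v \<bullet> v - (v \<bullet> w)^2 / (w \<bullet> w)"
    unfolding t_def using pos by (simp add: field_simps power2_eq_square)
  finally show ?thesis using pos by (simp add: field_simps)
qed

lemma cauchy_schwarz: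
  assumes "(v::real vec) \<in> carrier_vec n" "w \<in> carrier_vec n"
  shows "v \<bullet> w \<le> vnorm v * vnorm w"
proof -
  have "sqrt ((v \<bullet> w)^2) \<le> sqrt ((v \<bullet> v) * (w \<bullet> w))"
    by (rule real_sqrt_le_mono[OF cauchy_schwarz_square[OF assms]])
  thus ?thesis unfolding vnorm_def by (simp add: real_sqrt_mult)
qed

lemma vnorm_triangle:
  assumes v: "(v::real vec) \<in> carrier_vec n" and w: "w \<in> carrier_vec n"
  shows "vnorm (v + w) \<le> vnorm v + vnorm w"
proof (rule power2_le_imp_le)
  have "(vnorm (v + w))^2 = v \<bullet> v + 2 * (v \<bullet> w) + w \<bullet> w"
    unfolding vnorm_square using v w
    by (simp add: add_scalar_prod_distrib[of _ n] scalar_prod_add_distrib[of _ n] comm_scalar_prod[of w n v])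
  also have "\<dots> \<le> (vnorm v + vnorm w)^2"
    using cauchy_schwarz[OF v w] by (simp add: power2_sum vnorm_square)
  finally show "(vnorm (v + w))^2 \<le> (vnorm v + vnorm w)^2" .
qed (simp add: vnorm_nonneg)

lemma vnorm_diff_le:
  assumes v: "(v::real vec) \<in> carrier_vec n" and w: "w \<in> carrier_vec n"
  shows "vnorm (v - w) \<le> vnorm v + vnorm w"
proof -
  have "v - w = v + (-1) \<cdot>\<^sub>v w" using v w by (intro eq_vecI) auto
  thus ?thesis using vnorm_triangle[OF v, of "(-1) \<cdot>\<^sub>v w"] vnorm_smult[of "-1" w] w by auto
qed

lemma scalar_prod_transpose_mat:
  fixes B :: "real mat"
  assumes B: "B \<in> carrier_mat a b" and x: "x \<in> carrier_vec b" and y: "y \<in> carrier_vec a"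
  shows "x \<bullet> (transpose_mat B *\<^sub>v y) = (B *\<^sub>v x) \<bullet> y"
proof -
  have "x \<bullet> (transpose_mat B *\<^sub>v y) = (transpose_mat B *\<^sub>v y) \<bullet> x"
    by (rule comm_scalar_prod[of _ b]) (use B x y in auto)
  also have "\<dots> = y \<bullet> (B *\<^sub>v x)" by (rule transpose_vec_mult_scalar[OF B x y])
  also have "\<dots> = (B *\<^sub>v x) \<bullet> y" by (rule comm_scalar_prod[of _ a]) (use B x y in auto)
  finally show ?thesis .
qed

lemma orthonormal_cols_scalar_prod:
  assumes Q: "(Q :: real mat) \<in> carrier_mat a b" and QQ: "transpose_mat Q * Q = 1\<^sub>m b"
    and v: "v \<in> carrier_vec b"
  shows "(Q *\<^sub>v v) \<bullet> (Q *\<^sub>v v) = v \<bullet> v"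
proof -
  have "transpose_mat Q *\<^sub>v (Q *\<^sub>v v) = v"
    using Q v QQ by (simp add: assoc_mult_mat_vec[symmetric, of _ b a _ b])
  thus ?thesis using scalar_prod_transpose_mat[OF Q v, of "Q *\<^sub>v v"] Q v by simp
qed

lemma vnorm_orthonormal_cols:
  "(Q :: real mat) \<in> carrier_mat a b \<Longrightarrow> transpose_mat Q * Q = 1\<^sub>m b \<Longrightarrow> v \<in> carrier_vec b \<Longrightarrow>
    vnorm (Q *\<^sub>v v) = vnorm v"
  unfolding vnorm_def by (simp add: orthonormal_cols_scalar_prod)

text \<open>Unlike \<open>op_norm M \<le> c\<close>, \<open>norm_bound M c\<close> composes without side conditions.\<close>
definition norm_bound :: "real mat \<Rightarrow> real \<Rightarrow> bool" where
  "norm_bound M c \<longleftrightarrow> (\<forall>v \<in> carrier_vec (dim_col M). vnorm (M *\<^sub>v v) \<le> c * vnorm v)"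

lemma norm_boundI:
  assumes "M \<in> carrier_mat a b" "\<And>v. v \<in> carrier_vec b \<Longrightarrow> vnorm (M *\<^sub>v v) \<le> c * vnorm v"
  shows "norm_bound M c"
  using assms unfolding norm_bound_def by auto

lemma norm_boundD:
  "norm_bound M c \<Longrightarrow> M \<in> carrier_mat a b \<Longrightarrow> v \<in> carrier_vec b \<Longrightarrow> vnorm (M *\<^sub>v v) \<le> c * vnorm v"
  unfolding norm_bound_def by auto

lemma vnorm_normalize:
  assumes "0 < vnorm v"
  shows "vnorm ((1 / vnorm v) \<cdot>\<^sub>v v) = 1"
  using assms by (simp add: vnorm_smult)

lemma mult_mat_vec_normalize:
  assumes "v \<in> carrier_vec (dim_col M)" "0 < vnorm v"
  shows "vnorm (M *\<^sub>v ((1 / vnorm v) \<cdot>\<^sub>v v)) = vnorm (M *\<^sub>v v) / vnorm v"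
  using assms by (simp add: mult_mat_vec[of _ "dim_row M" "dim_col M"] vnorm_smult)

lemma vnorm_mult_mat_vec_bounded:
  assumes v: "v \<in> carrier_vec (dim_col M)" "vnorm v \<le> 1"
  shows "vnorm (M *\<^sub>v v) \<le> sqrt (\<Sum>i<dim_row M. row M i \<bullet> row M i)"
proof -
  have vv: "v \<bullet> v \<le> 1"
    using v(2) vnorm_nonneg[of v] power_le_one[of "vnorm v" 2] unfolding vnorm_square by simp
  have "(M *\<^sub>v v) \<bullet> (M *\<^sub>v v) = (\<Sum>i<dim_row M. (row M i \<bullet> v)^2)"
    unfolding scalar_prod_self_eq_sum by simp
  also have "\<dots> \<le> (\<Sum>i<dim_row M. row M i \<bullet> row M i)"
  proof (rule sum_mono)
    fix i assume "i \<in> {..<dim_row M}"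
    hence "(row M i \<bullet> v)^2 \<le> (row M i \<bullet> row M i) * (v \<bullet> v)"
      using cauchy_schwarz_square[OF _ v(1)] by auto
    also have "\<dots> \<le> row M i \<bullet> row M i"
      using vv scalar_prod_self_nonneg[of "row M i"] by (simp add: mult_left_le)
    finally show "(row M i \<bullet> v)^2 \<le> row M i \<bullet> row M i" .
  qed
  finally show ?thesis unfolding vnorm_def by simp
qed

lemma op_norm_upper:
  assumes "v \<in> carrier_vec (dim_col M)" "vnorm v \<le> 1"
  shows "vnorm (M *\<^sub>v v) \<le> op_norm M"
  unfolding op_norm_def
proof (rule cSup_upper)
  show "bdd_above {vnorm (M *\<^sub>v v) |v. v \<in> carrier_vec (dim_col M) \<and> vnorm v \<le> 1}"
    using vnorm_mult_mat_vec_bounded[of _ M]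
    by (intro bdd_aboveI[of _ "sqrt (\<Sum>i<dim_row M. row M i \<bullet> row M i)"]) auto
qed (use assms in auto)

lemma op_norm_nonneg: "0 \<le> op_norm M"
  using op_norm_upper[of "0\<^sub>v (dim_col M)" M] vnorm_nonneg[of "M *\<^sub>v 0\<^sub>v (dim_col M)"]
  by (auto simp: vnorm_zero_vec)

lemma op_norm_le_of_norm_bound:
  assumes "norm_bound M c" "0 \<le> c"
  shows "op_norm M \<le> c"
  unfolding op_norm_def
proof (rule cSup_least)
  show "{vnorm (M *\<^sub>v v) |v. v \<in> carrier_vec (dim_col M) \<and> vnorm v \<le> 1} \<noteq> {}"
    by (auto simp: vnorm_zero_vec intro!: exI[of _ "0\<^sub>v (dim_col M)"])
  fix x assume "x \<in> {vnorm (M *\<^sub>v v) |v. v \<in> carrier_vec (dim_col M) \<and> vnorm v \<le> 1}"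
  then obtain v where v: "v \<in> carrier_vec (dim_col M)" "vnorm v \<le> 1" and x: "x = vnorm (M *\<^sub>v v)"
    by auto
  have "x \<le> c * vnorm v" using assms(1) v x unfolding norm_bound_def by auto
  also have "\<dots> \<le> c" using v assms(2) by (simp add: mult_left_le)
  finally show "x \<le> c" .
qed

lemma norm_bound_op_norm: "norm_bound M (op_norm M)"
  unfolding norm_bound_def
proof
  fix v :: "real vec" assume v: "v \<in> carrier_vec (dim_col M)"
  show "vnorm (M *\<^sub>v v) \<le> op_norm M * vnorm v"
  proof (cases "vnorm v = 0")
    case True
    hence "M *\<^sub>v v = 0\<^sub>v (dim_row M)" using vnorm_eq_0_imp_zero[OF v] by auto
    thus ?thesis by (simp add: vnorm_zero_vec True)
  next
    case False
    hence pos: "0 < vnorm v" using vnorm_nonneg[of v] by simp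
    have "vnorm (M *\<^sub>v ((1 / vnorm v) \<cdot>\<^sub>v v)) \<le> op_norm M"
      using op_norm_upper[of _ M] v vnorm_normalize[OF pos] by simp
    thus ?thesis using pos mult_mat_vec_normalize[OF v pos] by (simp add: field_simps)
  qed
qed

lemma norm_bound_mult:
  assumes M: "M \<in> carrier_mat a b" and N: "N \<in> carrier_mat b c"
    and "norm_bound M x" "norm_bound N y" "0 \<le> x"
  shows "norm_bound (M * N) (x * y)"
proof (rule norm_boundI)
  show "M * N \<in> carrier_mat a c" using M N by auto
  fix v :: "real vec" assume v: "v \<in> carrier_vec c"
  have "vnorm ((M * N) *\<^sub>v v) = vnorm (M *\<^sub>v (N *\<^sub>v v))" using M N v by simp
  also have "\<dots> \<le> x * vnorm (N *\<^sub>v v)" using norm_boundD[OF assms(3) M] N v by simp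
  also have "\<dots> \<le> x * (y * vnorm v)" using norm_boundD[OF assms(4) N v] assms(5) by (rule mult_left_mono)
  finally show "vnorm ((M * N) *\<^sub>v v) \<le> x * y * vnorm v" by simp
qed

lemma norm_bound_add:
  assumes M: "M \<in> carrier_mat a b" and N: "N \<in> carrier_mat a b"
    and "norm_bound M x" "norm_bound N y"
  shows "norm_bound (M + N) (x + y)"
proof (rule norm_boundI)
  show "M + N \<in> carrier_mat a b" using M N by auto
  fix v :: "real vec" assume v: "v \<in> carrier_vec b"
  have "vnorm ((M + N) *\<^sub>v v) \<le> vnorm (M *\<^sub>v v) + vnorm (N *\<^sub>v v)"
    using vnorm_triangle[of "M *\<^sub>v v" a "N *\<^sub>v v"] M N v by (simp add: add_mult_distrib_mat_vec)
  also have "\<dots> \<le> (x + y) * vnorm v"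
    using norm_boundD[OF assms(3) M v] norm_boundD[OF assms(4) N v] by (simp add: algebra_simps)
  finally show "vnorm ((M + N) *\<^sub>v v) \<le> (x + y) * vnorm v" .
qed

lemma norm_bound_diff:
  assumes M: "M \<in> carrier_mat a b" and N: "N \<in> carrier_mat a b"
    and "norm_bound M x" "norm_bound N y"
  shows "norm_bound (M - N) (x + y)"
proof (rule norm_boundI)
  show "M - N \<in> carrier_mat a b" using M N by auto
  fix v :: "real vec" assume v: "v \<in> carrier_vec b"
  have "vnorm ((M - N) *\<^sub>v v) \<le> vnorm (M *\<^sub>v v) + vnorm (N *\<^sub>v v)"
    using vnorm_diff_le[of "M *\<^sub>v v" a "N *\<^sub>v v"] M N v by (simp add: minus_mult_distrib_mat_vec)
  also have "\<dots> \<le> (x + y) * vnorm v"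
    using norm_boundD[OF assms(3) M v] norm_boundD[OF assms(4) N v] by (simp add: algebra_simps)
  finally show "vnorm ((M - N) *\<^sub>v v) \<le> (x + y) * vnorm v" .
qed

lemma norm_bound_orthonormal_cols:
  "Q \<in> carrier_mat a b \<Longrightarrow> transpose_mat Q * Q = 1\<^sub>m b \<Longrightarrow> norm_bound Q 1"
  by (rule norm_boundI) (auto simp: vnorm_orthonormal_cols)

lemma sigma_min_le:
  assumes v: "v \<in> carrier_vec (dim_col M)"
  shows "sigma_min M * vnorm v \<le> vnorm (M *\<^sub>v v)"
proof (cases "vnorm v = 0")
  case True thus ?thesis using vnorm_nonneg[of "M *\<^sub>v v"] by simp
next
  case False
  hence pos: "0 < vnorm v" using vnorm_nonneg[of v] by simp
  have "sigma_min M \<le> vnorm (M *\<^sub>v ((1 / vnorm v) \<cdot>\<^sub>v v))"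
    unfolding sigma_min_def using v vnorm_normalize[OF pos]
    by (intro cInf_lower) (auto intro!: bdd_belowI[of _ 0] simp: vnorm_nonneg)
  thus ?thesis using pos mult_mat_vec_normalize[OF v pos] by (simp add: field_simps)
qed

lemma sigma_min_geI:
  assumes "0 < dim_col M"
    and "\<And>v. v \<in> carrier_vec (dim_col M) \<Longrightarrow> vnorm v = 1 \<Longrightarrow> c \<le> vnorm (M *\<^sub>v v)"
  shows "c \<le> sigma_min M"
  unfolding sigma_min_def
proof (rule cInf_greatest)
  show "{vnorm (M *\<^sub>v v) |v. v \<in> carrier_vec (dim_col M) \<and> vnorm v = 1} \<noteq> {}"
    using assms(1) vnorm_unit_vec[of 0 "dim_col M"] by (auto intro!: exI[of _ "unit_vec (dim_col M) 0"])
qed (use assms(2) in auto)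

section \<open>Real symmetric matrices and the polar decomposition\<close>

lemma eigenvector_of_real_mat_re_im:
  fixes A :: "real mat"
  assumes A: "A \<in> carrier_mat n n" and ev: "eigenvector (map_mat complex_of_real A) v l"
  shows "A *\<^sub>v map_vec Re v = Re l \<cdot>\<^sub>v map_vec Re v - Im l \<cdot>\<^sub>v map_vec Im v"
    and "A *\<^sub>v map_vec Im v = Im l \<cdot>\<^sub>v map_vec Re v + Re l \<cdot>\<^sub>v map_vec Im v"
proof -
  have v: "v \<in> carrier_vec n" and eq: "map_mat complex_of_real A *\<^sub>v v = l \<cdot>\<^sub>v v"
    using ev A unfolding eigenvector_def by auto
  have comp: "(\<Sum>j<n. complex_of_real (A $$ (i,j)) * v $ j) = l * v $ i" if i: "i < n" for i
    using arg_cong[OF eq, of "\<lambda>x. x $ i"] i A v by (auto simp: lessThan_atLeast0 scalar_prod_def)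
  show "A *\<^sub>v map_vec Re v = Re l \<cdot>\<^sub>v map_vec Re v - Im l \<cdot>\<^sub>v map_vec Im v"
  proof (rule eq_vecI)
    fix i assume "i < dim_vec (Re l \<cdot>\<^sub>v map_vec Re v - Im l \<cdot>\<^sub>v map_vec Im v)"
    hence i: "i < n" using v by auto
    have "(\<Sum>j<n. A $$ (i,j) * Re (v $ j)) = Re l * Re (v$i) - Im l * Im (v $ i)"
      using arg_cong[OF comp[OF i], of Re] by (simp add: Re_sum)
    thus "(A *\<^sub>v map_vec Re v) $ i = (Re l \<cdot>\<^sub>v map_vec Re v - Im l \<cdot>\<^sub>v map_vec Im v) $ i"
      using i A v by (auto simp: lessThan_atLeast0 scalar_prod_def)
  qed (use A v in auto)
  show "A *\<^sub>v map_vec Im v = Im l \<cdot>\<^sub>v map_vec Re v + Re l \<cdot>\<^sub>v map_vec Im v"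
  proof (rule eq_vecI)
    fix i assume "i < dim_vec (Im l \<cdot>\<^sub>v map_vec Re v + Re l \<cdot>\<^sub>v map_vec Im v)"
    hence i: "i < n" using v by auto
    have "(\<Sum>j<n. A $$ (i,j) * Im (v $ j)) = Re l * Im (v$i) + Im l * Re (v $ i)"
      using arg_cong[OF comp[OF i], of Im] by (simp add: Im_sum)
    thus "(A *\<^sub>v map_vec Im v) $ i = (Im l \<cdot>\<^sub>v map_vec Re v + Re l \<cdot>\<^sub>v map_vec Im v) $ i"
      using i A v by (auto simp: lessThan_atLeast0 scalar_prod_def algebra_simps)
  qed (use A v in auto)
qed

text \<open>Writing a complex eigenvector as \<open>x + i y\<close>, symmetry of \<open>G\<close> gives
  \<open>Im e * (x \<bullet> x + y \<bullet> y) = 0\<close>, so the eigenvalue is real and \<open>x\<close> or \<open>y\<close> is a real eigenvector.\<close>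
lemma real_symmetric_mat_unit_eigenvector:
  fixes G :: "real mat"
  assumes G: "G \<in> carrier_mat m m" and sym: "transpose_mat G = G" and m: "0 < m"
  shows "\<exists>u lam. u \<in> carrier_vec m \<and> u \<bullet> u = 1 \<and> G *\<^sub>v u = lam \<cdot>\<^sub>v u"
proof -
  define Gc where "Gc = map_mat complex_of_real G"
  have Gc: "Gc \<in> carrier_mat m m" using G unfolding Gc_def by auto
  obtain as where cp: "char_poly Gc = (\<Prod> a \<leftarrow> as. [:- a, 1:])" and len: "length as = m"
    using char_poly_factorized[OF Gc] by blast
  obtain e rest where as: "as = e # rest" using len m by (cases as) auto
  have "eigenvalue Gc e" using eigenvalue_root_char_poly[OF Gc] unfolding cp as by simp
  then obtain v where ev: "eigenvector Gc v e" unfolding eigenvalue_def by auto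
  have v: "v \<in> carrier_vec m" "v \<noteq> 0\<^sub>v m" using ev Gc unfolding eigenvector_def by auto
  define x where "x = map_vec Re v"
  define y where "y = map_vec Im v"
  have xc: "x \<in> carrier_vec m" and yc: "y \<in> carrier_vec m" unfolding x_def y_def using v by auto
  note Gx = eigenvector_of_real_mat_re_im(1)[OF G ev[unfolded Gc_def], folded x_def y_def]
  note Gy = eigenvector_of_real_mat_re_im(2)[OF G ev[unfolded Gc_def], folded x_def y_def]
  have "x \<bullet> (G *\<^sub>v y) = y \<bullet> (G *\<^sub>v x)"
    using scalar_prod_transpose_mat[OF G yc xc] comm_scalar_prod[OF yc, of "G *\<^sub>v x"]
      comm_scalar_prod[OF xc, of "G *\<^sub>v y"] G xc yc
    unfolding sym by simp
  hence "Im e * (x \<bullet> x + y \<bullet> y) = 0"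
    unfolding Gx Gy using xc yc comm_scalar_prod[OF xc yc]
    by (simp add: scalar_prod_add_distrib[of _ m] scalar_prod_minus_distrib[of _ m] algebra_simps)
  moreover have pos: "0 < x \<bullet> x + y \<bullet> y"
  proof -
    obtain i where i: "i < m" "v $ i \<noteq> 0" using v by (metis carrier_vecD eq_vecI index_zero_vec(1,2))
    hence "x $ i \<noteq> 0 \<or> y $ i \<noteq> 0" unfolding x_def y_def using v by (auto simp: complex_eq_iff)
    thus ?thesis using scalar_prod_self_pos[of i x] scalar_prod_self_pos[of i y]
        scalar_prod_self_nonneg[of x] scalar_prod_self_nonneg[of y] xc yc i by auto
  qed
  ultimately have "Im e = 0" by simp
  hence "G *\<^sub>v x = Re e \<cdot>\<^sub>v x" "G *\<^sub>v y = Re e \<cdot>\<^sub>v y" using Gx Gy xc yc by auto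
  then obtain z where z: "z \<in> carrier_vec m" "0 < z \<bullet> z" "G *\<^sub>v z = Re e \<cdot>\<^sub>v z"
    using xc yc pos scalar_prod_self_nonneg[of x] by (cases "0 < x \<bullet> x") auto
  define u where "u = (1 / sqrt (z \<bullet> z)) \<cdot>\<^sub>v z"
  have "u \<bullet> u = 1" unfolding u_def using z by (simp add: power2_eq_square[symmetric])
  moreover have "G *\<^sub>v u = Re e \<cdot>\<^sub>v u" unfolding u_def using z G
    by (simp add: mult_mat_vec smult_smult_assoc mult.commute)
  moreover have "u \<in> carrier_vec m" using z(1) unfolding u_def by auto
  ultimately show ?thesis by blast
qed

lemma householder_reflection:
  fixes u :: "real vec"
  assumes u: "u \<in> carrier_vec m" "u \<bullet> u = 1" "u $ 0 \<le> 0" and m: "0 < m"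
  shows "\<exists>H \<in> carrier_mat m m. transpose_mat H = H \<and> H * H = 1\<^sub>m m \<and> H *\<^sub>v unit_vec m 0 = u"
proof -
  define w where "w = u - unit_vec m 0"
  have wc: "w \<in> carrier_vec m" unfolding w_def using u by auto
  have ww: "w \<bullet> w = 2 - 2 * u $ 0"
    unfolding w_def using u m
    by (simp add: minus_scalar_prod_distrib[of _ m] scalar_prod_minus_distrib[of _ m]
        comm_scalar_prod[of u m "unit_vec m 0"])
  define a where "a = 2 / (w \<bullet> w)"
  have pos: "w \<bullet> w > 0" using ww u by auto
  define H where "H = mat m m (\<lambda>(i,j). (if i = j then 1 else 0) - a * (w $ i * w $ j))"
  have Hc: "H \<in> carrier_mat m m" unfolding H_def by auto
  have HT: "transpose_mat H = H" unfolding H_def by (rule eq_matI) (auto simp: mult.commute)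
  have rowH: "row H i = unit_vec m i - (a * w $ i) \<cdot>\<^sub>v w" if "i < m" for i
    unfolding H_def using that wc by (intro eq_vecI) auto
  have colH: "col H j = unit_vec m j - (a * w $ j) \<cdot>\<^sub>v w" if "j < m" for j
    unfolding H_def using that wc by (intro eq_vecI) (auto simp: mult.commute)
  have HH: "H * H = 1\<^sub>m m"
  proof (rule eq_matI)
    fix i j assume "i < dim_row (1\<^sub>m m :: real mat)" "j < dim_col (1\<^sub>m m :: real mat)"
    hence i: "i < m" and j: "j < m" by auto
    have "(H * H) $$ (i,j) = (unit_vec m i - (a * w $ i) \<cdot>\<^sub>v w) \<bullet> (unit_vec m j - (a * w $ j) \<cdot>\<^sub>v w)"
      using rowH[OF i] colH[OF j] i j Hc by simp
    also have "\<dots> = (if i = j then 1 else 0) - a * w$i * w$j - a * w$j * w$i + a * w$i * (a * w$j) * (w \<bullet> w)"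
      using wc i j
      by (simp add: minus_scalar_prod_distrib[of _ m] scalar_prod_minus_distrib[of _ m]
          comm_scalar_prod[of w m "unit_vec m _"] algebra_simps)
    also have "\<dots> = (if i = j then 1 else 0)" unfolding a_def using pos by (simp add: field_simps)
    finally show "(H * H) $$ (i,j) = 1\<^sub>m m $$ (i,j)" using i j by simp
  qed (use Hc in auto)
  have "H *\<^sub>v unit_vec m 0 = col H 0" using Hc m by (intro eq_vecI) auto
  also have "\<dots> = unit_vec m 0 - (a * w $ 0) \<cdot>\<^sub>v w" using colH m by auto
  also have "a * w $ 0 = -1" unfolding a_def ww using u m by (simp add: w_def field_simps)
  also have "unit_vec m 0 - (-1) \<cdot>\<^sub>v w = u" unfolding w_def using u m by (intro eq_vecI) auto
  finally show ?thesis using Hc HT HH by blast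
qed

lemma symmetric_mat_eigen_first_col_block:
  fixes G :: "real mat"
  assumes G: "G \<in> carrier_mat (Suc m) (Suc m)" and sym: "transpose_mat G = G"
    and e0: "G *\<^sub>v unit_vec (Suc m) 0 = lam \<cdot>\<^sub>v unit_vec (Suc m) 0"
  defines "G' \<equiv> mat m m (\<lambda>(i,j). G $$ (Suc i, Suc j))"
  shows "G = four_block_mat (mat 1 1 (\<lambda>_. lam)) (0\<^sub>m 1 m) (0\<^sub>m m 1) G'"
    and "transpose_mat G' = G'"
proof -
  have col0: "G $$ (i,0) = (if i = 0 then lam else 0)" if i: "i < Suc m" for i
    using arg_cong[OF e0, of "\<lambda>x. x $ i"] i G by simp
  have row0: "G $$ (0,j) = (if j = 0 then lam else 0)" if j: "j < Suc m" for j
    using col0[OF j] arg_cong[OF sym, of "\<lambda>M. M $$ (j,0)"] j G by simp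
  show "G = four_block_mat (mat 1 1 (\<lambda>_. lam)) (0\<^sub>m 1 m) (0\<^sub>m m 1) G'"
  proof (rule eq_matI)
    fix i j assume "i < dim_row (four_block_mat (mat 1 1 (\<lambda>_. lam)) (0\<^sub>m 1 m) (0\<^sub>m m 1) G')"
      "j < dim_col (four_block_mat (mat 1 1 (\<lambda>_. lam)) (0\<^sub>m 1 m) (0\<^sub>m m 1) G')"
    hence ij: "i < Suc m" "j < Suc m" unfolding G'_def by auto
    show "G $$ (i,j) = four_block_mat (mat 1 1 (\<lambda>_. lam)) (0\<^sub>m 1 m) (0\<^sub>m m 1) G' $$ (i,j)"
    proof (cases "i = 0 \<or> j = 0")
      case True thus ?thesis using ij col0 row0 unfolding G'_def by auto
    next
      case False
      then obtain i' j' where "i = Suc i'" "j = Suc j'" by (cases i; cases j) auto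
      thus ?thesis using ij unfolding G'_def by auto
    qed
  qed (use G in \<open>auto simp: G'_def\<close>)
  show "transpose_mat G' = G'"
  proof (rule eq_matI)
    fix i j assume "i < dim_row G'" "j < dim_col G'"
    thus "transpose_mat G' $$ (i,j) = G' $$ (i,j)"
      unfolding G'_def using G arg_cong[OF sym, of "\<lambda>M. M $$ (Suc i, Suc j)"] by auto
  qed (simp_all add: G'_def)
qed

lemma real_symmetric_mat_deflation:
  fixes G :: "real mat"
  assumes G: "G \<in> carrier_mat (Suc m) (Suc m)" and sym: "transpose_mat G = G"
  shows "\<exists>H \<in> carrier_mat (Suc m) (Suc m). \<exists>G' \<in> carrier_mat m m. \<exists>lam.
    transpose_mat H * H = 1\<^sub>m (Suc m) \<and> transpose_mat G' = G' \<and>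
    transpose_mat H * G * H = four_block_mat (mat 1 1 (\<lambda>_. lam)) (0\<^sub>m 1 m) (0\<^sub>m m 1) G'"
proof -
  let ?N = "Suc m" and ?e = "unit_vec (Suc m) 0"
  obtain u0 lam where u0: "u0 \<in> carrier_vec ?N" "u0 \<bullet> u0 = 1" "G *\<^sub>v u0 = lam \<cdot>\<^sub>v u0"
    using real_symmetric_mat_unit_eigenvector[OF G sym] by auto
  define u where "u = (if u0 $ 0 \<le> 0 then u0 else (-1) \<cdot>\<^sub>v u0)"
  have u: "u \<in> carrier_vec ?N" "u \<bullet> u = 1" "G *\<^sub>v u = lam \<cdot>\<^sub>v u" "u $ 0 \<le> 0"
    using u0 G unfolding u_def by (auto simp: mult_mat_vec smult_smult_assoc mult.commute)
  obtain H where Hc: "H \<in> carrier_mat ?N ?N" and HT: "transpose_mat H = H" and HH: "H * H = 1\<^sub>m ?N"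
    and He: "H *\<^sub>v ?e = u"
    using householder_reflection[OF u(1,2,4)] by auto
  define G1 where "G1 = H * G * H"
  have G1c: "G1 \<in> carrier_mat ?N ?N" unfolding G1_def using Hc G by auto
  have "transpose_mat G1 = transpose_mat H * transpose_mat (H * G)"
    unfolding G1_def by (rule transpose_mult[of _ ?N ?N]) (use Hc G in auto)
  also have "transpose_mat (H * G) = transpose_mat G * transpose_mat H"
    by (rule transpose_mult[of _ ?N ?N]) (use Hc G in auto)
  finally have G1T: "transpose_mat G1 = G1" unfolding G1_def HT sym using Hc G by simp
  have "H *\<^sub>v u = ?e" unfolding He[symmetric] using Hc HH
    by (simp add: assoc_mult_mat_vec[symmetric, of _ ?N ?N _ ?N])
  hence "G1 *\<^sub>v ?e = lam \<cdot>\<^sub>v ?e"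
    unfolding G1_def using Hc G u He by (simp add: mult_mat_vec assoc_mult_mat_vec[of _ ?N ?N _ ?N])
  from symmetric_mat_eigen_first_col_block[OF G1c G1T this]
  show ?thesis using Hc HT HH unfolding G1_def
    by (intro bexI[of _ H] bexI[of _ "mat m m (\<lambda>(i,j). G1 $$ (Suc i, Suc j))"] exI[of _ lam])
      (auto simp: G1_def)
qed

lemma diagonal_mat_four_block:
  assumes L: "L \<in> carrier_mat 1 1" and D: "diagonal_mat D" "D \<in> carrier_mat m m"
  shows "diagonal_mat (four_block_mat L (0\<^sub>m 1 m) (0\<^sub>m m 1) D)"
  unfolding diagonal_mat_def
proof (intro allI impI)
  fix i j assume i: "i < dim_row (four_block_mat L (0\<^sub>m 1 m) (0\<^sub>m m 1) D)"
    and j: "j < dim_col (four_block_mat L (0\<^sub>m 1 m) (0\<^sub>m m 1) D)" and ij: "i \<noteq> j"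
  have ij': "i < Suc m" "j < Suc m" using i j L D by auto
  show "four_block_mat L (0\<^sub>m 1 m) (0\<^sub>m m 1) D $$ (i,j) = 0"
  proof (cases "i = 0 \<or> j = 0")
    case True thus ?thesis using ij' ij L D by (auto simp: index_mat_four_block)
  next
    case False
    then obtain i' j' where ij2: "i = Suc i'" "j = Suc j'" by (cases i; cases j) auto
    hence "D $$ (i', j') = 0" using D ij ij' unfolding diagonal_mat_def by auto
    thus ?thesis using ij' L D ij2 by (simp add: index_mat_four_block)
  qed
qed

lemma four_block_one_conj:
  fixes V L D :: "real mat"
  assumes V: "V \<in> carrier_mat m m" and L: "L \<in> carrier_mat 1 1" and D: "D \<in> carrier_mat m m"
  defines "B \<equiv> four_block_mat (1\<^sub>m 1) (0\<^sub>m 1 m) (0\<^sub>m m 1) V"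
  shows "transpose_mat B * four_block_mat L (0\<^sub>m 1 m) (0\<^sub>m m 1) D * B =
      four_block_mat L (0\<^sub>m 1 m) (0\<^sub>m m 1) (transpose_mat V * D * V)"
    and "transpose_mat V * V = 1\<^sub>m m \<Longrightarrow> transpose_mat B * B = 1\<^sub>m (Suc m)"
proof -
  have BT: "transpose_mat B = four_block_mat (1\<^sub>m 1) (0\<^sub>m 1 m) (0\<^sub>m m 1) (transpose_mat V)"
    unfolding B_def using V by (subst transpose_four_block_mat) auto
  have "transpose_mat B * four_block_mat L (0\<^sub>m 1 m) (0\<^sub>m m 1) D =
      four_block_mat L (0\<^sub>m 1 m) (0\<^sub>m m 1) (transpose_mat V * D)"
    unfolding BT by (subst mult_four_block_mat[of _ 1 1 _ m _ m _ _ 1 _ m]) (use V L D in auto)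
  also have "\<dots> * B = four_block_mat L (0\<^sub>m 1 m) (0\<^sub>m m 1) (transpose_mat V * D * V)"
    unfolding B_def by (subst mult_four_block_mat[of _ 1 1 _ m _ m _ _ 1 _ m]) (use V L D in auto)
  finally show "transpose_mat B * four_block_mat L (0\<^sub>m 1 m) (0\<^sub>m m 1) D * B =
      four_block_mat L (0\<^sub>m 1 m) (0\<^sub>m m 1) (transpose_mat V * D * V)" .
  show "transpose_mat B * B = 1\<^sub>m (Suc m)" if "transpose_mat V * V = 1\<^sub>m m"
    unfolding BT by (unfold B_def, subst mult_four_block_mat[of _ 1 1 _ m _ m _ _ 1 _ m]) (use V that in auto)
qed

lemma real_symmetric_mat_orthogonally_diagonalizable:
  fixes G :: "real mat"
  assumes "G \<in> carrier_mat m m" "transpose_mat G = G"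
  shows "\<exists>U \<in> carrier_mat m m. transpose_mat U * U = 1\<^sub>m m \<and> diagonal_mat (transpose_mat U * G * U)"
  using assms
proof (induction m arbitrary: G)
  case 0
  show ?case by (intro bexI[of _ "1\<^sub>m 0"]) (auto simp: diagonal_mat_def)
next
  case (Suc m G)
  let ?N = "Suc m" and ?L = "\<lambda>lam. mat 1 1 (\<lambda>_. lam) :: real mat"
  obtain H G' lam where Hc: "H \<in> carrier_mat ?N ?N" and G'c: "G' \<in> carrier_mat m m"
    and HH: "transpose_mat H * H = 1\<^sub>m ?N" and G'T: "transpose_mat G' = G'"
    and HGH: "transpose_mat H * G * H = four_block_mat (?L lam) (0\<^sub>m 1 m) (0\<^sub>m m 1) G'"
    using real_symmetric_mat_deflation[OF Suc.prems] by blast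
  obtain V where Vc: "V \<in> carrier_mat m m" and VV: "transpose_mat V * V = 1\<^sub>m m"
    and Vd: "diagonal_mat (transpose_mat V * G' * V)"
    using Suc.IH[OF G'c G'T] by auto
  define B where "B = four_block_mat (1\<^sub>m 1) (0\<^sub>m 1 m) (0\<^sub>m m 1) V"
  have Bc: "B \<in> carrier_mat ?N ?N" and BTc: "transpose_mat B \<in> carrier_mat ?N ?N"
    unfolding B_def using Vc by auto
  have HTc: "transpose_mat H \<in> carrier_mat ?N ?N" using Hc by simp
  have "transpose_mat (H * B) * (H * B) = transpose_mat B * (transpose_mat H * H) * B"
    using Hc Bc HTc BTc by (simp add: transpose_mult[of _ ?N ?N] assoc_mult_mat[of _ ?N ?N _ ?N _ ?N])
  hence orth: "transpose_mat (H * B) * (H * B) = 1\<^sub>m ?N"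
    using four_block_one_conj(2)[OF Vc one_carrier_mat Vc VV] right_mult_one_mat[OF BTc]
    unfolding HH B_def by simp
  have "transpose_mat (H * B) * G * (H * B) = transpose_mat B * (transpose_mat H * G * H) * B"
    using Hc Bc HTc BTc Suc.prems(1)
    by (simp add: transpose_mult[of _ ?N ?N] assoc_mult_mat[of _ ?N ?N _ ?N _ ?N])
  also have "\<dots> = four_block_mat (?L lam) (0\<^sub>m 1 m) (0\<^sub>m m 1) (transpose_mat V * G' * V)"
    unfolding HGH B_def by (rule four_block_one_conj(1)[OF Vc _ G'c]) simp
  finally have "diagonal_mat (transpose_mat (H * B) * G * (H * B))"
    using diagonal_mat_four_block[OF _ Vd, of "?L lam"] Vc G'c by (simp only:) simp
  moreover have "H * B \<in> carrier_mat ?N ?N" using Hc Bc by simp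
  ultimately show ?case using orth by blast
qed

lemma scalar_prod_mat_diag:
  assumes y: "(y :: real vec) \<in> carrier_vec m"
  shows "y \<bullet> (mat_diag m f *\<^sub>v y) = (\<Sum>i<m. f i * (y$i)^2)"
proof -
  have "mat_diag m f *\<^sub>v y = vec m (\<lambda>i. f i * y $ i)"
  proof (rule eq_vecI)
    fix i assume "i < dim_vec (vec m (\<lambda>i. f i * y $ i))"
    hence i: "i < m" by simp
    have "(mat_diag m f *\<^sub>v y) $ i = (\<Sum>j\<in>{0..<m}. (if i = j then f j else 0) * y $ j)"
      using i y by (simp add: mat_diag_def scalar_prod_def)
    also have "\<dots> = (\<Sum>j\<in>{0..<m}. if j = i then f i * y $ i else 0)" by (rule sum.cong) auto
    finally show "(mat_diag m f *\<^sub>v y) $ i = vec m (\<lambda>i. f i * y $ i) $ i" using i by simp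
  qed (use y in \<open>auto simp: mat_diag_def\<close>)
  thus ?thesis using y by (simp add: scalar_prod_def lessThan_atLeast0 power2_eq_square ac_simps)
qed

lemma transpose_mat_diag: "transpose_mat (mat_diag m f) = mat_diag m f"
  unfolding mat_diag_def by (rule eq_matI) auto

lemma mat_diag_coercive:
  assumes s: "\<And>i. i < m \<Longrightarrow> c \<le> s i" and w: "(w :: real vec) \<in> carrier_vec m"
  shows "c * (w \<bullet> w) \<le> w \<bullet> (mat_diag m s *\<^sub>v w)"
proof -
  have "c * (w \<bullet> w) = (\<Sum>i<m. c * (w$i)^2)" using w by (simp add: scalar_prod_self_eq_sum sum_distrib_left)
  also have "\<dots> \<le> (\<Sum>i<m. s i * (w$i)^2)" by (rule sum_mono, rule mult_right_mono) (use s in auto)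
  finally show ?thesis unfolding scalar_prod_mat_diag[OF w] .
qed

lemma coercive_orthogonal_conj:
  fixes U M :: "real mat"
  assumes U: "U \<in> carrier_mat m m" and UUT: "U * transpose_mat U = 1\<^sub>m m" and M: "M \<in> carrier_mat m m"
    and coercive: "\<And>w. w \<in> carrier_vec m \<Longrightarrow> c * (w \<bullet> w) \<le> w \<bullet> (M *\<^sub>v w)"
    and v: "v \<in> carrier_vec m"
  shows "c * (v \<bullet> v) \<le> v \<bullet> ((U * M * transpose_mat U) *\<^sub>v v)"
proof -
  have UT: "transpose_mat U \<in> carrier_mat m m" using U by simp
  define w where "w = transpose_mat U *\<^sub>v v"
  have w: "w \<in> carrier_vec m" unfolding w_def using U v by simp
  have "(U * M * transpose_mat U) *\<^sub>v v = (U * M) *\<^sub>v w"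
    unfolding w_def by (rule assoc_mult_mat_vec[of _ m m]) (use U M v in auto)
  also have "\<dots> = U *\<^sub>v (M *\<^sub>v w)" by (rule assoc_mult_mat_vec[of _ m m]) (use U M w in auto)
  finally have "v \<bullet> ((U * M * transpose_mat U) *\<^sub>v v) = w \<bullet> (M *\<^sub>v w)"
    using scalar_prod_transpose_mat[OF UT v mult_mat_vec_carrier[OF M w]] unfolding w_def by simp
  moreover have "w \<bullet> w = v \<bullet> v"
    unfolding w_def by (rule orthonormal_cols_scalar_prod[OF UT _ v]) (simp add: UUT)
  ultimately show ?thesis using coercive[OF w] by simp
qed

lemma coercive_symmetric_mat_diag_decomposition:
  fixes G :: "real mat"
  assumes G: "G \<in> carrier_mat m m" and sym: "transpose_mat G = G" and c: "0 \<le> c"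
    and coercive: "\<And>w. w \<in> carrier_vec m \<Longrightarrow> c^2 * (w \<bullet> w) \<le> w \<bullet> (G *\<^sub>v w)"
  shows "\<exists>U \<in> carrier_mat m m. \<exists>s. transpose_mat U * U = 1\<^sub>m m \<and> U * transpose_mat U = 1\<^sub>m m \<and>
    G = U * mat_diag m (\<lambda>i. s i * s i) * transpose_mat U \<and> (\<forall>i < m. c \<le> s i)"
proof -
  obtain U where Uc: "U \<in> carrier_mat m m" and UTU: "transpose_mat U * U = 1\<^sub>m m"
    and Ud: "diagonal_mat (transpose_mat U * G * U)"
    using real_symmetric_mat_orthogonally_diagonalizable[OF G sym] by auto
  have UTc: "transpose_mat U \<in> carrier_mat m m" using Uc by simp
  have UUT: "U * transpose_mat U = 1\<^sub>m m" using mat_mult_left_right_inverse[OF UTc Uc UTU] .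
  define L where "L = transpose_mat U * G * U"
  have Lc: "L \<in> carrier_mat m m" unfolding L_def using Uc G by auto
  have Lge: "c^2 \<le> L $$ (i,i)" if i: "i < m" for i
  proof -
    have "L $$ (i,i) = col U i \<bullet> (G *\<^sub>v col U i)"
      unfolding L_def using Uc G i by (simp add: assoc_mult_mat[of _ m m _ m _ m] mult_mat_vec_def)
    moreover have "col U i \<bullet> col U i = 1"
      using arg_cong[OF UTU, of "\<lambda>M. M $$ (i,i)"] Uc i by simp
    ultimately show ?thesis using coercive[of "col U i"] Uc i by simp
  qed
  have Lnn: "0 \<le> L $$ (i,i)" if "i < m" for i using Lge[OF that] by (rule order_trans[OF zero_le_power2])
  define s where "s i = sqrt (L $$ (i,i))" for i
  have "c \<le> s i" if "i < m" for i
    using real_sqrt_le_mono[OF Lge[OF that]] c unfolding s_def by simp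
  moreover have "L = mat_diag m (\<lambda>i. s i * s i)"
  proof (rule eq_matI)
    fix i j assume "i < dim_row (mat_diag m (\<lambda>i. s i * s i))" "j < dim_col (mat_diag m (\<lambda>i. s i * s i))"
    thus "L $$ (i,j) = mat_diag m (\<lambda>i. s i * s i) $$ (i,j)"
      using Ud Lnn[of i] Lc unfolding L_def[symmetric] diagonal_mat_def mat_diag_def s_def by auto
  qed (use Lc in \<open>auto simp: mat_diag_def\<close>)
  moreover have "U * L * transpose_mat U = (U * transpose_mat U) * G * (U * transpose_mat U)"
    unfolding L_def using Uc UTc G by (simp add: assoc_mult_mat[of _ m m _ m _ m])
  hence "G = U * L * transpose_mat U" using G unfolding UUT by simp
  ultimately show ?thesis using Uc UTU UUT by blast
qed

lemma orthogonal_conj_mult: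
  fixes U A B :: "'a :: comm_ring_1 mat"
  assumes U: "U \<in> carrier_mat m m" and UTU: "transpose_mat U * U = 1\<^sub>m m"
    and A: "A \<in> carrier_mat m m" and B: "B \<in> carrier_mat m m"
  shows "(U * A * transpose_mat U) * (U * B * transpose_mat U) = U * (A * B) * transpose_mat U"
proof -
  have UT: "transpose_mat U \<in> carrier_mat m m" using U by simp
  have "(U * A * transpose_mat U) * (U * B * transpose_mat U) =
      U * (A * (transpose_mat U * U) * B) * transpose_mat U"
    using U UT A B by (simp add: assoc_mult_mat[of _ m m _ m _ m])
  thus ?thesis using A B unfolding UTU by simp
qed

lemma transpose_orthogonal_conj:
  fixes U A :: "'a :: comm_ring_1 mat"
  assumes U: "U \<in> carrier_mat m m" and A: "A \<in> carrier_mat m m"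
  shows "transpose_mat (U * A * transpose_mat U) = U * transpose_mat A * transpose_mat U"
proof -
  have "transpose_mat (U * A * transpose_mat U) = U * transpose_mat (U * A)"
    using U A by (subst transpose_mult[of _ m m _ m]) auto
  also have "transpose_mat (U * A) = transpose_mat A * transpose_mat U"
    using U A by (subst transpose_mult[of _ m m _ m]) auto
  finally show ?thesis using U A by (simp add: assoc_mult_mat[of _ m m _ m _ m])
qed

text \<open>\<open>H\<close> is the square root of \<open>G\<close> (as \<open>H * H = H * Hi * G = G\<close>), and \<open>Hi\<close> its inverse.\<close>
lemma coercive_symmetric_mat_sqrt:
  fixes G :: "real mat"
  assumes G: "G \<in> carrier_mat m m" and sym: "transpose_mat G = G" and c: "0 < c"
    and coercive: "\<And>w. w \<in> carrier_vec m \<Longrightarrow> c^2 * (w \<bullet> w) \<le> w \<bullet> (G *\<^sub>v w)"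
  shows "\<exists>H \<in> carrier_mat m m. \<exists>Hi \<in> carrier_mat m m. transpose_mat Hi = Hi \<and> Hi * G = H \<and>
    H * Hi = 1\<^sub>m m \<and> (\<forall>w \<in> carrier_vec m. c * (w \<bullet> w) \<le> w \<bullet> (H *\<^sub>v w))"
proof -
  obtain U s where Uc: "U \<in> carrier_mat m m" and UTU: "transpose_mat U * U = 1\<^sub>m m"
    and UUT: "U * transpose_mat U = 1\<^sub>m m" and GU: "G = U * mat_diag m (\<lambda>i. s i * s i) * transpose_mat U"
    and s: "\<And>i. i < m \<Longrightarrow> c \<le> s i"
    using coercive_symmetric_mat_diag_decomposition[OF G sym _ coercive] c by auto
  have UTc: "transpose_mat U \<in> carrier_mat m m" using Uc by simp
  have s0: "s i \<noteq> 0" if "i < m" for i using s[OF that] c by auto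
  define H where "H = U * mat_diag m s * transpose_mat U"
  define Hi where "Hi = U * mat_diag m (\<lambda>i. 1 / s i) * transpose_mat U"
  have Hc: "H \<in> carrier_mat m m" and Hic: "Hi \<in> carrier_mat m m" unfolding H_def Hi_def using Uc by auto
  have diag_eq: "mat_diag m f = mat_diag m g" if "\<And>i. i < m \<Longrightarrow> f i = g i" for f g :: "nat \<Rightarrow> real"
    unfolding mat_diag_def using that by (intro eq_matI) auto
  have "transpose_mat Hi = Hi"
    unfolding Hi_def transpose_orthogonal_conj[OF Uc mat_diag_dim] transpose_mat_diag ..
  moreover have "Hi * G = H"
    unfolding Hi_def H_def GU orthogonal_conj_mult[OF Uc UTU mat_diag_dim mat_diag_dim] mat_diag_diag
    using s0 by (auto intro!: arg_cong2[where f = "(*)"] diag_eq)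
  moreover have "H * Hi = U * transpose_mat U"
    unfolding Hi_def H_def orthogonal_conj_mult[OF Uc UTU mat_diag_dim mat_diag_dim] mat_diag_diag
    using s0 Uc by (subst diag_eq[where g = "\<lambda>_. 1"]) auto
  hence "H * Hi = 1\<^sub>m m" unfolding UUT .
  moreover have "c * (w \<bullet> w) \<le> w \<bullet> (H *\<^sub>v w)" if "w \<in> carrier_vec m" for w
    unfolding H_def by (rule coercive_orthogonal_conj[OF Uc UUT mat_diag_dim mat_diag_coercive[OF s] that])
  ultimately show ?thesis using Hc Hic by blast
qed

lemma coercive_mat_lower_bound:
  fixes T :: "real mat"
  assumes T: "T \<in> carrier_mat m m" and v: "v \<in> carrier_vec m"
    and coercive: "c * (v \<bullet> v) \<le> v \<bullet> (T *\<^sub>v v)"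
  shows "c * vnorm v \<le> vnorm (T *\<^sub>v v)"
proof (cases "vnorm v = 0")
  case True thus ?thesis using vnorm_nonneg[of "T *\<^sub>v v"] by simp
next
  case False
  hence pos: "0 < vnorm v" using vnorm_nonneg[of v] by simp
  have "(c * vnorm v) * vnorm v \<le> v \<bullet> (T *\<^sub>v v)"
    using coercive unfolding vnorm_square[symmetric] by (simp add: power2_eq_square ac_simps)
  also have "\<dots> \<le> vnorm (T *\<^sub>v v) * vnorm v"
    using cauchy_schwarz[of v m "T *\<^sub>v v"] v T by (simp add: ac_simps)
  finally show ?thesis using pos by simp
qed

lemma coercive_mat_invertible:
  fixes T :: "real mat"
  assumes T: "T \<in> carrier_mat m m" and c: "0 < c"
    and coercive: "\<And>v. v \<in> carrier_vec m \<Longrightarrow> c * (v \<bullet> v) \<le> v \<bullet> (T *\<^sub>v v)"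
  shows "\<exists>Ti \<in> carrier_mat m m. Ti * T = 1\<^sub>m m \<and> T * Ti = 1\<^sub>m m"
proof -
  have "v = 0\<^sub>v m" if v: "v \<in> carrier_vec m" "T *\<^sub>v v = 0\<^sub>v m" for v
    using coercive_mat_lower_bound[OF T v(1) coercive[OF v(1)]] c v vnorm_nonneg[of v]
      vnorm_eq_0_imp_zero[OF v(1)] by (simp add: vnorm_zero_vec mult_le_0_iff)
  hence "det T \<noteq> 0" using det_0_iff_vec_prod_zero_field[OF T] by blast
  from det_non_zero_imp_unit[OF T this, of "()"]
  show ?thesis unfolding Units_def ring_mat_def by auto
qed

text \<open>The orthogonal factor \<open>Om\<close> of the polar decomposition \<open>S = Om H\<close>: rotating by it turns
  a lower bound on \<open>S\<close> into coercivity of \<open>S * Om\<^sup>T = Om H Om\<^sup>T\<close>.\<close>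
lemma polar_rotation_coercive:
  fixes S :: "real mat"
  assumes S: "S \<in> carrier_mat m m" and c: "0 < c"
    and lower: "\<And>v. v \<in> carrier_vec m \<Longrightarrow> c * vnorm v \<le> vnorm (S *\<^sub>v v)"
  shows "\<exists>Om \<in> carrier_mat m m. transpose_mat Om * Om = 1\<^sub>m m \<and> Om * transpose_mat Om = 1\<^sub>m m \<and>
    (\<forall>v \<in> carrier_vec m. c * (v \<bullet> v) \<le> v \<bullet> ((S * transpose_mat Om) *\<^sub>v v))"
proof -
  define G where "G = transpose_mat S * S"
  have G: "G \<in> carrier_mat m m" unfolding G_def using S by auto
  have sym: "transpose_mat G = G" unfolding G_def using S by (simp add: transpose_mult[of _ m m])
  have "c^2 * (w \<bullet> w) \<le> w \<bullet> (G *\<^sub>v w)" if w: "w \<in> carrier_vec m" for w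
  proof -
    have "(c * vnorm w)^2 \<le> (vnorm (S *\<^sub>v w))^2"
      using lower[OF w] c vnorm_nonneg[of w] by (intro power_mono) auto
    moreover have "w \<bullet> (G *\<^sub>v w) = (S *\<^sub>v w) \<bullet> (S *\<^sub>v w)"
      unfolding G_def using scalar_prod_transpose_mat[OF S w, of "S *\<^sub>v w"] S w by simp
    ultimately show ?thesis by (simp add: power_mult_distrib vnorm_square)
  qed
  then obtain H Hi where Hc: "H \<in> carrier_mat m m" and Hic: "Hi \<in> carrier_mat m m"
    and HiT: "transpose_mat Hi = Hi" and HiG: "Hi * G = H" and HHi: "H * Hi = 1\<^sub>m m"
    and Hcoercive: "\<And>w. w \<in> carrier_vec m \<Longrightarrow> c * (w \<bullet> w) \<le> w \<bullet> (H *\<^sub>v w)"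
    using coercive_symmetric_mat_sqrt[OF G sym c] by blast
  define Om where "Om = S * Hi"
  have Oc: "Om \<in> carrier_mat m m" and OTc: "transpose_mat Om \<in> carrier_mat m m"
    unfolding Om_def using S Hic by auto
  have OTS: "transpose_mat Om * S = H"
    unfolding Om_def G_def using S Hic HiT HiG[unfolded G_def]
    by (simp add: transpose_mult[of _ m m] assoc_mult_mat[of _ m m _ m _ m])
  have OTO: "transpose_mat Om * Om = 1\<^sub>m m"
    using OTS HHi OTc S Hic unfolding Om_def by (simp flip: assoc_mult_mat[of _ m m _ m _ m])
  have OOT: "Om * transpose_mat Om = 1\<^sub>m m" using mat_mult_left_right_inverse[OF OTc Oc OTO] .
  have "Om * H = (Om * transpose_mat Om) * S"
    unfolding OTS[symmetric] using Oc OTc S by (simp add: assoc_mult_mat[of _ m m _ m _ m])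
  hence "S * transpose_mat Om = Om * H * transpose_mat Om" using S unfolding OOT by simp
  hence "c * (v \<bullet> v) \<le> v \<bullet> ((S * transpose_mat Om) *\<^sub>v v)" if "v \<in> carrier_vec m" for v
    using coercive_orthogonal_conj[OF Oc OOT Hc Hcoercive that] by simp
  thus ?thesis using Oc OTO OOT by blast
qed

section \<open>Orthonormal frames and block inverses\<close>

lemma hcat_carrier: "P1 \<in> carrier_mat n k \<Longrightarrow> P2 \<in> carrier_mat n m \<Longrightarrow> hcat P1 P2 \<in> carrier_mat n (k + m)"
  unfolding hcat_def by auto

lemma col_hcat:
  assumes "P1 \<in> carrier_mat n k" "P2 \<in> carrier_mat n m" "j < k + m"
  shows "col (hcat P1 P2) j = (if j < k then col P1 j else col P2 (j - k))"
  using assms unfolding hcat_def by (intro eq_vecI) auto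

lemma row_hcat_scalar_prod:
  fixes P1 P2 Q1 Q2 :: "real mat"
  assumes P1: "P1 \<in> carrier_mat n k" and P2: "P2 \<in> carrier_mat n m"
    and Q1: "Q1 \<in> carrier_mat n' k" and Q2: "Q2 \<in> carrier_mat n' m" and i: "i < n" and j: "j < n'"
  shows "row (hcat P1 P2) i \<bullet> row (hcat Q1 Q2) j = row P1 i \<bullet> row Q1 j + row P2 i \<bullet> row Q2 j"
proof -
  have "row (hcat P1 P2) i \<bullet> row (hcat Q1 Q2) j =
      (\<Sum>l\<in>{0..<k+m}. if l < k then P1 $$ (i,l) * Q1 $$ (j,l) else P2 $$ (i, l-k) * Q2 $$ (j, l-k))"
    using assms unfolding hcat_def scalar_prod_def by (auto intro!: sum.cong)
  also have "\<dots> = (\<Sum>l\<in>{0..<k}. P1 $$ (i,l) * Q1 $$ (j,l)) + (\<Sum>l\<in>{k..<k+m}. P2 $$ (i, l-k) * Q2 $$ (j, l-k))"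
    by (subst sum.atLeastLessThan_concat[symmetric, of 0 k "k+m"]) (auto intro!: arg_cong2[where f = "(+)"] sum.cong)
  also have "(\<Sum>l\<in>{k..<k+m}. P2 $$ (i, l-k) * Q2 $$ (j, l-k)) = (\<Sum>l\<in>{0..<m}. P2 $$ (i, l) * Q2 $$ (j, l))"
    using sum.shift_bounds_nat_ivl[of "\<lambda>l. P2 $$ (i, l-k) * Q2 $$ (j, l-k)" 0 k m] by (simp add: ac_simps)
  finally show ?thesis using assms unfolding scalar_prod_def by auto
qed

lemma dim_le_of_right_inverse:
  fixes M N :: "real mat"
  assumes M: "M \<in> carrier_mat a b" and N: "N \<in> carrier_mat b a" and MN: "M * N = 1\<^sub>m a"
  shows "a \<le> b"
proof (rule ccontr)
  assume "\<not> a \<le> b"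
  hence ba: "b < a" by simp
  define M' where "M' = mat a a (\<lambda>(i,j). if j < b then M $$ (i,j) else 0)"
  define N' where "N' = mat a a (\<lambda>(i,j). if i < b then N $$ (i,j) else 0)"
  have M'c: "M' \<in> carrier_mat a a" and N'c: "N' \<in> carrier_mat a a" unfolding M'_def N'_def by auto
  have "M' * N' = M * N"
  proof (rule eq_matI)
    fix i j assume "i < dim_row (M * N)" "j < dim_col (M * N)"
    hence i: "i < a" and j: "j < a" using M N by auto
    have "(M' * N') $$ (i,j) = (\<Sum>l\<in>{0..<a}. if l < b then M $$ (i,l) * N $$ (l,j) else 0)"
      using i j unfolding M'_def N'_def by (auto simp: scalar_prod_def intro!: sum.cong)
    also have "\<dots> = (\<Sum>l\<in>{0..<b}. M $$ (i,l) * N $$ (l,j))"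
      by (rule sum.mono_neutral_cong_right) (use ba in auto)
    finally show "(M' * N') $$ (i,j) = (M * N) $$ (i,j)" using M N i j by (simp add: scalar_prod_def)
  qed (use M N M'c N'c in auto)
  hence "N' * M' = 1\<^sub>m a" using mat_mult_left_right_inverse[OF M'c N'c] MN by simp
  moreover have "(N' * M') $$ (a - 1, a - 1) = 0"
    using ba M'c N'c unfolding N'_def by (auto simp: scalar_prod_def intro!: sum.neutral)
  ultimately show False using ba by simp
qed

lemma mat_eq_of_mult_vec_eq:
  fixes A B :: "real mat"
  assumes A: "A \<in> carrier_mat a b" and B: "B \<in> carrier_mat a b"
    and eq: "\<And>x. x \<in> carrier_vec b \<Longrightarrow> A *\<^sub>v x = B *\<^sub>v x"
  shows "A = B"
proof (rule eq_matI)
  fix i j assume "i < dim_row B" "j < dim_col B"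
  hence i: "i < a" and j: "j < b" using B by auto
  have "A $$ (i,j) = (A *\<^sub>v unit_vec b j) $ i" using A i j by simp
  also have "\<dots> = (B *\<^sub>v unit_vec b j) $ i" by (subst eq) (use j in auto)
  finally show "A $$ (i,j) = B $$ (i,j)" using B i j by simp
qed (use A B in auto)

lemma onb_orth_compl_cross_zero:
  assumes P1: "onb_cols n k P1 U" and P2: "onb_cols n d P2 (orth_compl n U)"
  shows "transpose_mat P2 * P1 = 0\<^sub>m d k"
proof -
  have P1c: "P1 \<in> carrier_mat n k" and P1col: "{P1 *\<^sub>v v | v. v \<in> carrier_vec k} = U"
    and P2c: "P2 \<in> carrier_mat n d" and P2col: "{P2 *\<^sub>v v | v. v \<in> carrier_vec d} = orth_compl n U"
    using P1 P2 unfolding onb_cols_def by auto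
  show ?thesis
  proof (rule eq_matI)
    fix i j assume "i < dim_row (0\<^sub>m d k :: real mat)" "j < dim_col (0\<^sub>m d k :: real mat)"
    hence i: "i < d" and j: "j < k" by auto
    have "P2 *\<^sub>v unit_vec d i \<in> orth_compl n U" unfolding P2col[symmetric] by auto
    moreover have "P1 *\<^sub>v unit_vec k j \<in> U" unfolding P1col[symmetric] by auto
    ultimately have "(P2 *\<^sub>v unit_vec d i) \<bullet> (P1 *\<^sub>v unit_vec k j) = 0" unfolding orth_compl_def by auto
    moreover have "P2 *\<^sub>v unit_vec d i = col P2 i" "P1 *\<^sub>v unit_vec k j = col P1 j"
      using i j P1c P2c by (auto intro!: eq_vecI)
    ultimately show "(transpose_mat P2 * P1) $$ (i,j) = 0\<^sub>m d k $$ (i,j)" using i j P1c P2c by simp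
  qed (use P1c P2c in auto)
qed

lemma onb_orth_compl_resolution:
  assumes P1: "onb_cols n k P1 U" and P2: "onb_cols n d P2 (orth_compl n U)"
  shows "P1 * transpose_mat P1 + P2 * transpose_mat P2 = 1\<^sub>m n"
proof -
  have P1c: "P1 \<in> carrier_mat n k" and P1o: "transpose_mat P1 * P1 = 1\<^sub>m k"
    and P1col: "{P1 *\<^sub>v v | v. v \<in> carrier_vec k} = U"
    and P2c: "P2 \<in> carrier_mat n d" and P2o: "transpose_mat P2 * P2 = 1\<^sub>m d"
    and P2col: "{P2 *\<^sub>v v | v. v \<in> carrier_vec d} = orth_compl n U"
    using P1 P2 unfolding onb_cols_def by auto
  have P21: "transpose_mat P2 * P1 = 0\<^sub>m d k" by (rule onb_orth_compl_cross_zero[OF P1 P2])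
  have "(P1 * transpose_mat P1 + P2 * transpose_mat P2) *\<^sub>v x = x" if x: "x \<in> carrier_vec n" for x
  proof -
    define a where "a = P1 *\<^sub>v (transpose_mat P1 *\<^sub>v x)"
    have ac: "a \<in> carrier_vec n" unfolding a_def using P1c x by simp
    have "transpose_mat P1 *\<^sub>v a = transpose_mat P1 *\<^sub>v x"
      unfolding a_def using P1c x P1o by (simp add: assoc_mult_mat_vec[symmetric, of _ k n _ k])
    hence P1y: "transpose_mat P1 *\<^sub>v (x - a) = 0\<^sub>v k"
      using P1c x ac by (simp add: mult_minus_distrib_mat_vec[of _ k n])
    have "x - a \<in> orth_compl n U" unfolding orth_compl_def
    proof (intro CollectI conjI ballI)
      fix u assume "u \<in> U"
      then obtain w where w: "w \<in> carrier_vec k" and u: "u = P1 *\<^sub>v w" using P1col by auto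
      have "(x - a) \<bullet> u = (transpose_mat P1 *\<^sub>v (x - a)) \<bullet> w"
        unfolding u using transpose_vec_mult_scalar[OF P1c w, of "x - a"] x ac by simp
      thus "(x - a) \<bullet> u = 0" unfolding P1y using w by simp
    qed (use x ac in simp)
    then obtain z where z: "z \<in> carrier_vec d" and yz: "x - a = P2 *\<^sub>v z" using P2col by auto
    have "transpose_mat P2 *\<^sub>v a = (transpose_mat P2 * P1) *\<^sub>v (transpose_mat P1 *\<^sub>v x)"
      unfolding a_def using P1c P2c x by (simp add: assoc_mult_mat_vec[of _ d n _ k])
    hence P2a: "transpose_mat P2 *\<^sub>v a = 0\<^sub>v d" unfolding P21 using P1c x by auto
    have "z = transpose_mat P2 *\<^sub>v (x - a)" unfolding yz using P2c z P2o
      by (simp add: assoc_mult_mat_vec[symmetric, of _ d n _ d])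
    also have "\<dots> = transpose_mat P2 *\<^sub>v x - transpose_mat P2 *\<^sub>v a"
      using P2c x ac by (simp add: mult_minus_distrib_mat_vec[of _ d n])
    also have "\<dots> = transpose_mat P2 *\<^sub>v x" unfolding P2a using P2c x by auto
    finally have "x - a = P2 *\<^sub>v (transpose_mat P2 *\<^sub>v x)" using yz by simp
    hence "x = a + P2 *\<^sub>v (transpose_mat P2 *\<^sub>v x)" using x ac P2c by (intro eq_vecI) (auto simp: vec_eq_iff)
    thus ?thesis unfolding a_def using P1c P2c x by (simp add: add_mult_distrib_mat_vec[of _ n n])
  qed
  thus ?thesis using P1c P2c by (intro mat_eq_of_mult_vec_eq[of _ n n]) auto
qed

lemma onb_orth_compl_dim:
  assumes P1: "onb_cols n k P1 U" and P2: "onb_cols n d P2 (orth_compl n U)"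
  shows "k + d = n"
proof -
  have P1c: "P1 \<in> carrier_mat n k" and P1o: "transpose_mat P1 * P1 = 1\<^sub>m k"
    and P2c: "P2 \<in> carrier_mat n d" and P2o: "transpose_mat P2 * P2 = 1\<^sub>m d"
    using P1 P2 unfolding onb_cols_def by auto
  have P21: "transpose_mat P2 * P1 = 0\<^sub>m d k" by (rule onb_orth_compl_cross_zero[OF P1 P2])
  define P where "P = hcat P1 P2"
  have Pc: "P \<in> carrier_mat n (k + d)" unfolding P_def by (rule hcat_carrier[OF P1c P2c])
  have PTc: "transpose_mat P \<in> carrier_mat (k + d) n" using Pc by simp
  have "transpose_mat P * P = 1\<^sub>m (k + d)"
  proof (rule eq_matI)
    fix i j assume "i < dim_row (1\<^sub>m (k + d) :: real mat)" "j < dim_col (1\<^sub>m (k + d) :: real mat)"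
    hence i: "i < k + d" and j: "j < k + d" by auto
    have cols: "col P l = (if l < k then col P1 l else col P2 (l - k))" if "l < k + d" for l
      unfolding P_def by (rule col_hcat[OF P1c P2c that])
    have "col P1 i' \<bullet> col P1 j' = 1\<^sub>m k $$ (i',j')" if "i' < k" "j' < k" for i' j'
      using arg_cong[OF P1o, of "\<lambda>M. M $$ (i',j')"] that P1c by simp
    moreover have "col P2 i' \<bullet> col P2 j' = 1\<^sub>m d $$ (i',j')" if "i' < d" "j' < d" for i' j'
      using arg_cong[OF P2o, of "\<lambda>M. M $$ (i',j')"] that P2c by simp
    moreover have "col P2 i' \<bullet> col P1 j' = 0" if "i' < d" "j' < k" for i' j'
      using arg_cong[OF P21, of "\<lambda>M. M $$ (i',j')"] that P1c P2c by simp
    moreover have "col P1 j' \<bullet> col P2 i' = col P2 i' \<bullet> col P1 j'" for i' j'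
      using P1c P2c by (intro comm_scalar_prod[of _ n]) auto
    ultimately show "(transpose_mat P * P) $$ (i,j) = 1\<^sub>m (k + d) $$ (i,j)"
      using i j Pc cols[OF i] cols[OF j] by auto
  qed (use Pc in auto)
  moreover have "P * transpose_mat P = 1\<^sub>m n"
  proof (rule eq_matI)
    fix i j assume "i < dim_row (1\<^sub>m n :: real mat)" "j < dim_col (1\<^sub>m n :: real mat)"
    hence i: "i < n" and j: "j < n" by auto
    have "(P * transpose_mat P) $$ (i,j) = row P1 i \<bullet> row P1 j + row P2 i \<bullet> row P2 j"
      using Pc i j unfolding P_def by (simp add: row_hcat_scalar_prod[OF P1c P2c P1c P2c i j])
    also have "\<dots> = (P1 * transpose_mat P1 + P2 * transpose_mat P2) $$ (i,j)"
      using P1c P2c i j by simp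
    finally show "(P * transpose_mat P) $$ (i,j) = 1\<^sub>m n $$ (i,j)"
      unfolding onb_orth_compl_resolution[OF P1 P2] .
  qed (use Pc in auto)
  ultimately show ?thesis using dim_le_of_right_inverse[OF PTc Pc] dim_le_of_right_inverse[OF Pc PTc] by simp
qed

lemma onb_cols_mult_orthogonal:
  assumes Q: "onb_cols n d Q V" and W: "W \<in> carrier_mat d d"
    and WTW: "transpose_mat W * W = 1\<^sub>m d" and WWT: "W * transpose_mat W = 1\<^sub>m d"
  shows "onb_cols n d (Q * W) V"
proof -
  have Qc: "Q \<in> carrier_mat n d" and QQ: "transpose_mat Q * Q = 1\<^sub>m d"
    and Qcol: "{Q *\<^sub>v v | v. v \<in> carrier_vec d} = V"
    using Q unfolding onb_cols_def by auto
  have WTc: "transpose_mat W \<in> carrier_mat d d" using W by simp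
  have QQW: "transpose_mat Q * (Q * W) = W"
    using Qc W QQ by (simp flip: assoc_mult_mat[of _ d n _ d _ d])
  have "transpose_mat (Q * W) * (Q * W) = transpose_mat W * transpose_mat Q * (Q * W)"
    by (simp add: transpose_mult[OF Qc W])
  also have "\<dots> = transpose_mat W * (transpose_mat Q * (Q * W))"
    by (rule assoc_mult_mat[of _ d d _ n _ d]) (use Qc W in auto)
  finally have orth: "transpose_mat (Q * W) * (Q * W) = 1\<^sub>m d" unfolding QQW WTW .
  have "{(Q * W) *\<^sub>v v | v. v \<in> carrier_vec d} = {Q *\<^sub>v v | v. v \<in> carrier_vec d}"
  proof (intro equalityI subsetI)
    fix x assume "x \<in> {(Q * W) *\<^sub>v v | v. v \<in> carrier_vec d}"
    then obtain v where v: "v \<in> carrier_vec d" and x: "x = (Q * W) *\<^sub>v v" by auto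
    have "x = Q *\<^sub>v (W *\<^sub>v v)" "W *\<^sub>v v \<in> carrier_vec d" unfolding x using Qc W v by auto
    thus "x \<in> {Q *\<^sub>v v | v. v \<in> carrier_vec d}" by (intro CollectI exI conjI)
  next
    fix x assume "x \<in> {Q *\<^sub>v v | v. v \<in> carrier_vec d}"
    then obtain v where v: "v \<in> carrier_vec d" and x: "x = Q *\<^sub>v v" by auto
    have "x = (Q * W) *\<^sub>v (transpose_mat W *\<^sub>v v)" "transpose_mat W *\<^sub>v v \<in> carrier_vec d"
      unfolding x using Qc W WTc v WWT
      by (simp_all add: assoc_mult_mat_vec[of _ n d _ d] assoc_mult_mat_vec[symmetric, of _ d d _ d])
    thus "x \<in> {(Q * W) *\<^sub>v v | v. v \<in> carrier_vec d}" by (intro CollectI exI conjI)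
  qed
  moreover have "Q * W \<in> carrier_mat n d" using Qc W by simp
  ultimately show ?thesis using orth Qcol unfolding onb_cols_def by simp
qed

lemma exists_coercive_aligned_basis:
  assumes P2: "P2 \<in> carrier_mat n d" and Q: "onb_cols n d Q V"
    and sig: "1 - \<xi> < sigma_min (transpose_mat P2 * Q)" and xi: "\<xi> < 1"
  shows "\<exists>Q2. onb_cols n d Q2 V \<and>
    (\<forall>v \<in> carrier_vec d. (1 - \<xi>) * (v \<bullet> v) \<le> v \<bullet> ((transpose_mat P2 * Q2) *\<^sub>v v))"
proof -
  have Qc: "Q \<in> carrier_mat n d" using Q unfolding onb_cols_def by auto
  define S where "S = transpose_mat P2 * Q"
  have S: "S \<in> carrier_mat d d" unfolding S_def using P2 Qc by auto
  have "(1 - \<xi>) * vnorm v \<le> vnorm (S *\<^sub>v v)" if v: "v \<in> carrier_vec d" for v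
    using mult_right_mono[OF less_imp_le[OF sig] vnorm_nonneg[of v]] sigma_min_le[of v S] S v
    unfolding S_def by auto
  then obtain Om where Om: "Om \<in> carrier_mat d d" and OTO: "transpose_mat Om * Om = 1\<^sub>m d"
    and OOT: "Om * transpose_mat Om = 1\<^sub>m d"
    and coercive: "\<forall>v \<in> carrier_vec d. (1 - \<xi>) * (v \<bullet> v) \<le> v \<bullet> ((S * transpose_mat Om) *\<^sub>v v)"
    using polar_rotation_coercive[OF S, of "1 - \<xi>"] xi by auto
  have "onb_cols n d (Q * transpose_mat Om) V"
    by (rule onb_cols_mult_orthogonal[OF Q]) (use Om OTO OOT in auto)
  moreover have "transpose_mat P2 * (Q * transpose_mat Om) = S * transpose_mat Om"
    unfolding S_def using P2 Qc Om by (simp add: assoc_mult_mat[of _ d n _ d _ d])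
  ultimately show ?thesis using coercive by auto
qed

lemma row_append_rows:
  assumes "R1 \<in> carrier_mat k n" "R2 \<in> carrier_mat m n" "i < k + m"
  shows "row (R1 @\<^sub>r R2) i = (if i < k then row R1 i else row R2 (i - k))"
  using assms unfolding append_rows_def by (intro eq_vecI) auto

lemma append_rows_upper_block:
  assumes "R1 \<in> carrier_mat k n" "R2 \<in> carrier_mat m n"
  shows "mat k n (\<lambda>(i, j). (R1 @\<^sub>r R2) $$ (i, j)) = R1"
  using assms unfolding append_rows_def by (intro eq_matI) auto

lemma append_rows_lower_block:
  assumes "R1 \<in> carrier_mat k n" "R2 \<in> carrier_mat m n"
  shows "mat m n (\<lambda>(i, j). (R1 @\<^sub>r R2) $$ (i + k, j)) = R2"
  using assms unfolding append_rows_def by (intro eq_matI) auto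

lemma append_rows_hcat_inverse:
  fixes R1 R2 P Q :: "real mat"
  assumes R1: "R1 \<in> carrier_mat k n" and R2: "R2 \<in> carrier_mat m n"
    and P: "P \<in> carrier_mat n k" and Q: "Q \<in> carrier_mat n m" and n: "n = k + m"
    and R1P: "R1 * P = 1\<^sub>m k" and R1Q: "R1 * Q = 0\<^sub>m k m"
    and R2P: "R2 * P = 0\<^sub>m m k" and R2Q: "R2 * Q = 1\<^sub>m m"
  shows "(R1 @\<^sub>r R2) * hcat P Q = 1\<^sub>m n" and "hcat P Q * (R1 @\<^sub>r R2) = 1\<^sub>m n"
proof -
  have Rc: "R1 @\<^sub>r R2 \<in> carrier_mat n n" using R1 R2 n by auto
  have Hc: "hcat P Q \<in> carrier_mat n n" using hcat_carrier[OF P Q] n by simp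
  have entry: "row R i \<bullet> col S j = (R * S) $$ (i, j)"
    if "R \<in> carrier_mat a n" "S \<in> carrier_mat n b" "i < a" "j < b" for R S :: "real mat" and a b i j
    using that by simp
  show left: "(R1 @\<^sub>r R2) * hcat P Q = 1\<^sub>m n"
  proof (rule eq_matI)
    fix i j assume "i < dim_row (1\<^sub>m n :: real mat)" "j < dim_col (1\<^sub>m n :: real mat)"
    hence i: "i < k + m" and j: "j < k + m" using n by auto
    have "((R1 @\<^sub>r R2) * hcat P Q) $$ (i, j) = row (R1 @\<^sub>r R2) i \<bullet> col (hcat P Q) j"
      using Rc Hc i j n by simp
    also have "\<dots> = 1\<^sub>m n $$ (i, j)"
      unfolding row_append_rows[OF R1 R2 i] col_hcat[OF P Q j]
      using entry[OF R1 P] entry[OF R1 Q] entry[OF R2 P] entry[OF R2 Q] i j n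
      unfolding R1P R1Q R2P R2Q by auto
    finally show "((R1 @\<^sub>r R2) * hcat P Q) $$ (i, j) = 1\<^sub>m n $$ (i, j)" .
  qed (use Rc Hc in auto)
  show "hcat P Q * (R1 @\<^sub>r R2) = 1\<^sub>m n" using mat_mult_left_right_inverse[OF Rc Hc left] .
qed

lemma hcat_conj_upper_right_block:
  fixes P1 P2 A :: "real mat"
  assumes P1: "P1 \<in> carrier_mat n k" and P2: "P2 \<in> carrier_mat n m" and A: "A \<in> carrier_mat n n"
  shows "mat k m (\<lambda>(i, j). (transpose_mat (hcat P1 P2) * A * hcat P1 P2) $$ (i, j + k)) =
    transpose_mat P1 * A * P2"
proof (rule eq_matI)
  let ?P = "hcat P1 P2"
  have Pc: "?P \<in> carrier_mat n (k + m)" by (rule hcat_carrier[OF P1 P2])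
  fix i j assume "i < dim_row (transpose_mat P1 * A * P2)" "j < dim_col (transpose_mat P1 * A * P2)"
  hence i: "i < k" and j: "j < m" using P1 P2 by auto
  have "(transpose_mat ?P * A * ?P) $$ (i, j + k) = col ?P i \<bullet> (A *\<^sub>v col ?P (j + k))"
    using Pc A i j by (simp add: assoc_mult_mat[of _ "k + m" n _ n _ "k + m"] mult_mat_vec_def)
  also have "\<dots> = col P1 i \<bullet> (A *\<^sub>v col P2 j)" using col_hcat[OF P1 P2] i j by simp
  also have "\<dots> = (transpose_mat P1 * A * P2) $$ (i, j)"
    using P1 P2 A i j by (simp add: assoc_mult_mat[of _ k n _ n _ m] mult_mat_vec_def)
  finally show "mat k m (\<lambda>(i, j). (transpose_mat ?P * A * ?P) $$ (i, j + k)) $$ (i, j) =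
      (transpose_mat P1 * A * P2) $$ (i, j)" using i j by simp
qed (use P1 P2 A in auto)

lemma onb_cols_invariant_factor:
  fixes A Q R :: "real mat"
  assumes Q: "onb_cols n m Q V" and A: "A \<in> carrier_mat n n" and invariant: "\<And>x. x \<in> V \<Longrightarrow> A *\<^sub>v x \<in> V"
    and R: "R \<in> carrier_mat m n" and RQ: "R * Q = 1\<^sub>m m"
  shows "A * Q = Q * (R * A * Q)"
proof -
  have Qc: "Q \<in> carrier_mat n m" and Qcol: "{Q *\<^sub>v v | v. v \<in> carrier_vec m} = V"
    using Q unfolding onb_cols_def by auto
  show ?thesis
  proof (rule mat_eq_of_mult_vec_eq[of _ n m])
    fix x :: "real vec" assume x: "x \<in> carrier_vec m"
    hence "Q *\<^sub>v x \<in> V" unfolding Qcol[symmetric] by auto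
    hence "A *\<^sub>v (Q *\<^sub>v x) \<in> {Q *\<^sub>v v | v. v \<in> carrier_vec m}" unfolding Qcol by (rule invariant)
    then obtain y where y: "y \<in> carrier_vec m" and Ay: "A *\<^sub>v (Q *\<^sub>v x) = Q *\<^sub>v y" by auto
    have "R *\<^sub>v (Q *\<^sub>v y) = y" using R Qc y RQ by (simp flip: assoc_mult_mat_vec[of _ m n _ m])
    hence "(Q * (R * A * Q)) *\<^sub>v x = Q *\<^sub>v y" using A Qc R x Ay
      by (simp add: assoc_mult_mat_vec[of _ n m _ m] assoc_mult_mat_vec[of _ m n _ m]
          assoc_mult_mat_vec[of _ m n _ n])
    thus "(A * Q) *\<^sub>v x = (Q * (R * A * Q)) *\<^sub>v x" using A Qc x Ay by simp
  qed (use A Qc R in auto)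
qed

section \<open>Invariance of the real eigenspaces\<close>

definition span_step :: "real \<times> real vec \<Rightarrow> real vec \<Rightarrow> real vec" where
  "span_step = (\<lambda>(c, v) acc. c \<cdot>\<^sub>v v + acc)"

lemma real_span_def': "real_span n G = {x. \<exists>cs. set (map snd cs) \<subseteq> G \<and> x = foldr span_step cs (0\<^sub>v n)}"
  unfolding real_span_def span_step_def ..

lemma foldr_span_step_carrier:
  "set (map snd cs) \<subseteq> carrier_vec n \<Longrightarrow> a \<in> carrier_vec n \<Longrightarrow> foldr span_step cs a \<in> carrier_vec n"
  by (induction cs) (auto simp: span_step_def)

lemma foldr_span_step_shift:
  assumes "set (map snd cs) \<subseteq> carrier_vec n" "a \<in> carrier_vec n"
  shows "foldr span_step cs a = foldr span_step cs (0\<^sub>v n) + a"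
  using assms
proof (induction cs)
  case (Cons p cs)
  obtain c v where p: "p = (c, v)" by (cases p)
  have "foldr span_step cs (0\<^sub>v n) \<in> carrier_vec n" using Cons(2) by (intro foldr_span_step_carrier) auto
  thus ?case using Cons p by (auto simp: span_step_def assoc_add_vec)
qed simp

lemma real_span_add:
  assumes G: "G \<subseteq> carrier_vec n" and x: "x \<in> real_span n G" and y: "y \<in> real_span n G"
  shows "x + y \<in> real_span n G"
proof -
  obtain cs1 where c1: "set (map snd cs1) \<subseteq> G" and x: "x = foldr span_step cs1 (0\<^sub>v n)"
    using x unfolding real_span_def' by auto
  obtain cs2 where c2: "set (map snd cs2) \<subseteq> G" and y: "y = foldr span_step cs2 (0\<^sub>v n)"
    using y unfolding real_span_def' by auto
  have "foldr span_step (cs1 @ cs2) (0\<^sub>v n) = x + y"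
    unfolding foldr_append o_def y[symmetric] x
    by (rule foldr_span_step_shift) (use c1 c2 G y foldr_span_step_carrier[of cs2 n] in auto)
  thus ?thesis unfolding real_span_def' using c1 c2 by (intro CollectI exI[of _ "cs1 @ cs2"]) auto
qed

lemma real_span_smult:
  assumes G: "G \<subseteq> carrier_vec n" and x: "x \<in> real_span n G"
  shows "a \<cdot>\<^sub>v x \<in> real_span n G"
proof -
  obtain cs where c: "set (map snd cs) \<subseteq> G" and x: "x = foldr span_step cs (0\<^sub>v n)"
    using x unfolding real_span_def' by auto
  have "a \<cdot>\<^sub>v foldr span_step cs (0\<^sub>v n) = foldr span_step (map (\<lambda>(d, v). (a * d, v)) cs) (0\<^sub>v n)"
    using c
  proof (induction cs)
    case (Cons p cs)
    obtain d v where p: "p = (d, v)" by (cases p)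
    have "set (map snd cs) \<subseteq> carrier_vec n" using Cons(2) G by auto
    hence "v \<in> carrier_vec n" "foldr span_step cs (0\<^sub>v n) \<in> carrier_vec n"
      using Cons(2) p G by (auto intro!: foldr_span_step_carrier)
    thus ?case using Cons p by (simp add: span_step_def smult_add_distrib_vec[of _ n] smult_smult_assoc)
  qed (intro eq_vecI, auto)
  moreover have "set (map snd (map (\<lambda>(d, v). (a * d, v)) cs)) \<subseteq> G" using c by auto
  ultimately show ?thesis unfolding real_span_def' x by blast
qed

lemma real_span_lincomb2:
  assumes "G \<subseteq> carrier_vec n" "g \<in> G" "h \<in> G"
  shows "a \<cdot>\<^sub>v g + b \<cdot>\<^sub>v h \<in> real_span n G"
proof -
  have "foldr span_step [(a, g), (b, h)] (0\<^sub>v n) = a \<cdot>\<^sub>v g + b \<cdot>\<^sub>v h"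
    using assms by (auto simp: span_step_def)
  thus ?thesis unfolding real_span_def' using assms by (intro CollectI exI[of _ "[(a, g), (b, h)]"]) auto
qed

lemma real_span_mult_mat_closed:
  assumes G: "G \<subseteq> carrier_vec n" and A: "A \<in> carrier_mat n n"
    and gen: "\<And>g. g \<in> G \<Longrightarrow> A *\<^sub>v g \<in> real_span n G"
    and x: "x \<in> real_span n G"
  shows "A *\<^sub>v x \<in> real_span n G"
proof -
  obtain cs where c: "set (map snd cs) \<subseteq> G" and x: "x = foldr span_step cs (0\<^sub>v n)"
    using x unfolding real_span_def' by auto
  show ?thesis unfolding x using c
  proof (induction cs)
    case Nil
    have "A *\<^sub>v 0\<^sub>v n = 0\<^sub>v n" using A by (intro eq_vecI) auto
    moreover have "0\<^sub>v n \<in> real_span n G" unfolding real_span_def' by (intro CollectI exI[of _ "[]"]) auto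
    ultimately show ?case by simp
  next
    case (Cons p cs)
    obtain d v where p: "p = (d, v)" by (cases p)
    have v: "v \<in> G" "v \<in> carrier_vec n" using Cons(2) p G by auto
    have rest: "foldr span_step cs (0\<^sub>v n) \<in> carrier_vec n"
      using Cons(2) G by (intro foldr_span_step_carrier) auto
    have "A *\<^sub>v foldr span_step (p # cs) (0\<^sub>v n) = d \<cdot>\<^sub>v (A *\<^sub>v v) + A *\<^sub>v foldr span_step cs (0\<^sub>v n)"
      using p A v rest by (simp add: span_step_def mult_add_distrib_mat_vec[of _ n n] mult_mat_vec[of _ n n])
    thus ?case using real_span_add[OF G real_span_smult[OF G gen[OF v(1)]] Cons.IH] Cons(2) by simp
  qed
qed

text \<open>The real and imaginary parts of a complex eigenvector span an \<open>A\<close>-invariant plane.\<close>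
lemma eig_real_space_mult_closed:
  fixes A :: "real mat"
  assumes A: "A \<in> carrier_mat n n" and x: "x \<in> eig_real_space P A"
  shows "A *\<^sub>v x \<in> eig_real_space P A"
proof -
  define G where "G = {map_vec Re v | v l. eigenvector (map_mat complex_of_real A) v l \<and> P l} \<union>
    {map_vec Im v | v l. eigenvector (map_mat complex_of_real A) v l \<and> P l}"
  have E: "eig_real_space P A = real_span n G" unfolding eig_real_space_def G_def using A by simp
  have Gc: "G \<subseteq> carrier_vec n" unfolding G_def eigenvector_def using A by auto
  have "A *\<^sub>v g \<in> real_span n G" if g: "g \<in> G" for g
  proof -
    obtain v l where ev: "eigenvector (map_mat complex_of_real A) v l" "P l"
      and gv: "g = map_vec Re v \<or> g = map_vec Im v"
      using g unfolding G_def by auto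
    have inG: "map_vec Re v \<in> G" "map_vec Im v \<in> G" using ev unfolding G_def by auto
    have "Re l \<cdot>\<^sub>v map_vec Re v - Im l \<cdot>\<^sub>v map_vec Im v = Re l \<cdot>\<^sub>v map_vec Re v + (- Im l) \<cdot>\<^sub>v map_vec Im v"
      using inG Gc by (intro eq_vecI) auto
    thus ?thesis
      using gv eigenvector_of_real_mat_re_im[OF A ev(1)] real_span_lincomb2[OF Gc inG] by auto
  qed
  thus ?thesis using real_span_mult_mat_closed[OF Gc A] x unfolding E by blast
qed

locale coercive_frames =
  fixes n k m :: nat and P1 P2 Q2 Ti :: "real mat" and \<xi> :: real
  assumes P1: "P1 \<in> carrier_mat n k" and P1_orth: "transpose_mat P1 * P1 = 1\<^sub>m k"
    and P2: "P2 \<in> carrier_mat n m" and P2_orth: "transpose_mat P2 * P2 = 1\<^sub>m m"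
    and Q2: "Q2 \<in> carrier_mat n m" and Q2_orth: "transpose_mat Q2 * Q2 = 1\<^sub>m m"
    and cross: "transpose_mat P2 * P1 = 0\<^sub>m m k"
    and resolution: "P1 * transpose_mat P1 + P2 * transpose_mat P2 = 1\<^sub>m n"
    and xi: "0 < \<xi>" "\<xi> < 1"
    and coercive: "\<And>v. v \<in> carrier_vec m \<Longrightarrow> (1 - \<xi>) * (v \<bullet> v) \<le> v \<bullet> ((transpose_mat P2 * Q2) *\<^sub>v v)"
    and Ti: "Ti \<in> carrier_mat m m" and Ti_inv: "Ti * (transpose_mat P2 * Q2) = 1\<^sub>m m"
begin

abbreviation T where "T \<equiv> transpose_mat P2 * Q2"

text \<open>\<open>R1\<close> and \<open>R2\<close> are the row blocks of the inverse of \<open>[P1 Q2]\<close>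
  (see \<open>block_inverse_estimates\<close>); \<open>Ti\<close> is the inverse of \<open>T\<close>.\<close>
definition R1 where "R1 = transpose_mat P1 - transpose_mat P1 * Q2 * Ti * transpose_mat P2"

definition R2 where "R2 = Ti * transpose_mat P2"

lemma T_carrier: "T \<in> carrier_mat m m"
  using P2 Q2 by auto

lemma R1_carrier: "R1 \<in> carrier_mat k n" and R2_carrier: "R2 \<in> carrier_mat m n"
  unfolding R1_def R2_def using P1 P2 Q2 Ti by auto

lemma scalar_prod_self_split:
  assumes x: "x \<in> carrier_vec n"
  shows "x \<bullet> x = (transpose_mat P1 *\<^sub>v x) \<bullet> (transpose_mat P1 *\<^sub>v x) + (transpose_mat P2 *\<^sub>v x) \<bullet> (transpose_mat P2 *\<^sub>v x)"
proof -
  have "x = P1 *\<^sub>v (transpose_mat P1 *\<^sub>v x) + P2 *\<^sub>v (transpose_mat P2 *\<^sub>v x)"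
    using arg_cong[OF resolution, of "\<lambda>M. M *\<^sub>v x"] P1 P2 x by (simp add: add_mult_distrib_mat_vec[of _ n n])
  hence "x \<bullet> x = x \<bullet> (P1 *\<^sub>v (transpose_mat P1 *\<^sub>v x)) + x \<bullet> (P2 *\<^sub>v (transpose_mat P2 *\<^sub>v x))"
    using P1 P2 x by (metis mult_mat_vec_carrier scalar_prod_add_distrib transpose_carrier_mat)
  thus ?thesis using transpose_vec_mult_scalar[OF P1 _ x] transpose_vec_mult_scalar[OF P2 _ x] P1 P2 x
    by simp
qed

lemma norm_bound_transpose_P1: "norm_bound (transpose_mat P1) 1"
  and norm_bound_transpose_P2: "norm_bound (transpose_mat P2) 1"
proof -
  have "vnorm (transpose_mat P1 *\<^sub>v x) \<le> 1 * vnorm x \<and> vnorm (transpose_mat P2 *\<^sub>v x) \<le> 1 * vnorm x"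
    if x: "x \<in> carrier_vec n" for x
  proof -
    have sq: "(vnorm (transpose_mat P1 *\<^sub>v x))^2 \<le> (1 * vnorm x)^2"
      "(vnorm (transpose_mat P2 *\<^sub>v x))^2 \<le> (1 * vnorm x)^2"
      using scalar_prod_self_split[OF x] scalar_prod_self_nonneg[of "transpose_mat P1 *\<^sub>v x"]
        scalar_prod_self_nonneg[of "transpose_mat P2 *\<^sub>v x"] by (auto simp: vnorm_square)
    show ?thesis using power2_le_imp_le[OF sq(1)] power2_le_imp_le[OF sq(2)] vnorm_nonneg[of x] by simp
  qed
  thus "norm_bound (transpose_mat P1) 1" "norm_bound (transpose_mat P2) 1"
    using P1 P2 by (auto intro: norm_boundI[of _ k n] norm_boundI[of _ m n])
qed

lemma T_lower_bound: "v \<in> carrier_vec m \<Longrightarrow> (1 - \<xi>) * vnorm v \<le> vnorm (T *\<^sub>v v)"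
  by (rule coercive_mat_lower_bound[OF T_carrier _ coercive])

lemma norm_bound_Ti: "norm_bound Ti (1 / (1 - \<xi>))"
proof (rule norm_boundI[OF Ti])
  fix x :: "real vec" assume x: "x \<in> carrier_vec m"
  have "T * Ti = 1\<^sub>m m" using mat_mult_left_right_inverse[OF Ti T_carrier Ti_inv] .
  hence "T *\<^sub>v (Ti *\<^sub>v x) = x" using T_carrier Ti x by (simp flip: assoc_mult_mat_vec[of _ m m _ m])
  hence "(1 - \<xi>) * vnorm (Ti *\<^sub>v x) \<le> vnorm x" using T_lower_bound[of "Ti *\<^sub>v x"] Ti x by simp
  thus "vnorm (Ti *\<^sub>v x) \<le> 1 / (1 - \<xi>) * vnorm x" using xi by (simp add: field_simps)
qed

lemma norm_bound_P1_Q2: "norm_bound (transpose_mat P1 * Q2) (sqrt (2 * \<xi>))"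
proof (rule norm_boundI)
  show "transpose_mat P1 * Q2 \<in> carrier_mat k m" using P1 Q2 by auto
  fix v :: "real vec" assume v: "v \<in> carrier_vec m"
  have split: "v \<bullet> v = (vnorm ((transpose_mat P1 * Q2) *\<^sub>v v))^2 + (vnorm (T *\<^sub>v v))^2"
    using scalar_prod_self_split[of "Q2 *\<^sub>v v"] orthonormal_cols_scalar_prod[OF Q2 Q2_orth v] P1 P2 Q2 v
    by (simp add: vnorm_square)
  have "((1 - \<xi>) * vnorm v)^2 \<le> (vnorm (T *\<^sub>v v))^2"
    using T_lower_bound[OF v] xi vnorm_nonneg[of v] by (intro power_mono) auto
  hence "(1 - \<xi>)^2 * (v \<bullet> v) \<le> (vnorm (T *\<^sub>v v))^2" by (simp add: power_mult_distrib vnorm_square)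
  hence "(vnorm ((transpose_mat P1 * Q2) *\<^sub>v v))^2 \<le> v \<bullet> v - (1 - \<xi>)^2 * (v \<bullet> v)"
    using split by linarith
  also have "\<dots> = (2 * \<xi> - \<xi>^2) * (v \<bullet> v)" by (simp add: power2_eq_square algebra_simps)
  also have "\<dots> \<le> (sqrt (2 * \<xi>) * vnorm v)^2"
    using xi scalar_prod_self_nonneg[of v] by (simp add: power_mult_distrib vnorm_square mult_right_mono)
  finally show "vnorm ((transpose_mat P1 * Q2) *\<^sub>v v) \<le> sqrt (2 * \<xi>) * vnorm v"
    by (rule power2_le_imp_le) (use xi vnorm_nonneg[of v] in simp)
qed

lemma norm_bound_P2_minus_Q2: "norm_bound (P2 - Q2) (sqrt (2 * \<xi>))"
proof (rule norm_boundI)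
  show "P2 - Q2 \<in> carrier_mat n m" using P2 Q2 by auto
  fix v :: "real vec" assume v: "v \<in> carrier_vec m"
  have pv: "P2 *\<^sub>v v \<in> carrier_vec n" and qv: "Q2 *\<^sub>v v \<in> carrier_vec n" using P2 Q2 v by auto
  have "(P2 *\<^sub>v v) \<bullet> (Q2 *\<^sub>v v) = v \<bullet> (T *\<^sub>v v)"
    using transpose_vec_mult_scalar[OF P2 v qv] P2 Q2 v comm_scalar_prod[OF v, of "transpose_mat P2 *\<^sub>v (Q2 *\<^sub>v v)"]
    by (simp add: comm_scalar_prod[OF pv qv])
  hence "(vnorm ((P2 - Q2) *\<^sub>v v))^2 = 2 * (v \<bullet> v) - 2 * (v \<bullet> (T *\<^sub>v v))"
    using P2 Q2 v pv qv orthonormal_cols_scalar_prod[OF P2 P2_orth v] orthonormal_cols_scalar_prod[OF Q2 Q2_orth v]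
    by (simp add: vnorm_square minus_mult_distrib_mat_vec minus_scalar_prod_distrib[of _ n]
        scalar_prod_minus_distrib[of _ n] comm_scalar_prod[OF qv pv])
  also have "\<dots> \<le> (sqrt (2 * \<xi>) * vnorm v)^2"
    using coercive[OF v] xi by (simp add: power_mult_distrib vnorm_square algebra_simps)
  finally show "vnorm ((P2 - Q2) *\<^sub>v v) \<le> sqrt (2 * \<xi>) * vnorm v"
    by (rule power2_le_imp_le) (use xi vnorm_nonneg[of v] in simp)
qed

lemma R1_P1: "R1 * P1 = 1\<^sub>m k" and R1_Q2: "R1 * Q2 = 0\<^sub>m k m"
  and R2_P1: "R2 * P1 = 0\<^sub>m m k" and R2_Q2: "R2 * Q2 = 1\<^sub>m m"
proof -
  let ?X = "transpose_mat P1 * Q2 * Ti"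
  have X: "?X \<in> carrier_mat k m" using P1 Q2 Ti by auto
  have XP1: "?X * transpose_mat P2 * P1 = 0\<^sub>m k k"
    using X P1 P2 by (simp add: assoc_mult_mat[of _ k m _ n _ k] cross right_mult_zero_mat[OF X])
  have "?X * transpose_mat P2 * Q2 = ?X * T"
    by (rule assoc_mult_mat[of _ k m _ n _ m]) (use X P2 Q2 in auto)
  also have "\<dots> = transpose_mat P1 * Q2 * (Ti * T)"
    by (rule assoc_mult_mat[of _ k m _ m _ m]) (use P1 Q2 Ti T_carrier in auto)
  finally have XQ2: "?X * transpose_mat P2 * Q2 = transpose_mat P1 * Q2" using P1 Q2 by (simp add: Ti_inv)
  show "R1 * P1 = 1\<^sub>m k"
    unfolding R1_def using P1 X P2
    by (simp add: minus_mult_distrib_mat[of _ k n] XP1 P1_orth) (intro eq_matI, auto)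
  show "R1 * Q2 = 0\<^sub>m k m"
    unfolding R1_def using P1 X P2 Q2 by (simp add: minus_mult_distrib_mat[of _ k n] XQ2)
  show "R2 * P1 = 0\<^sub>m m k"
    unfolding R2_def using Ti P2 P1 by (simp add: assoc_mult_mat[of _ m m _ n _ k] cross)
  show "R2 * Q2 = 1\<^sub>m m"
    unfolding R2_def using Ti P2 Q2 by (simp add: assoc_mult_mat[of _ m m _ n _ m] Ti_inv)
qed

lemma norm_bound_R2: "norm_bound R2 (1 / (1 - \<xi>))"
  using norm_bound_mult[OF Ti _ norm_bound_Ti norm_bound_transpose_P2] P2 xi unfolding R2_def by simp

lemma norm_bound_transpose_P1_minus_R1: "norm_bound (transpose_mat P1 - R1) (sqrt (2 * \<xi>) / (1 - \<xi>))"
proof -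
  have "transpose_mat P1 - R1 = transpose_mat P1 * Q2 * Ti * transpose_mat P2"
    unfolding R1_def using P1 P2 Q2 Ti by (intro eq_matI) auto
  moreover have "norm_bound (transpose_mat P1 * Q2 * Ti) (sqrt (2 * \<xi>) * (1 / (1 - \<xi>)))"
    by (rule norm_bound_mult[OF _ Ti norm_bound_P1_Q2 norm_bound_Ti]) (use P1 Q2 xi in auto)
  ultimately show ?thesis
    using norm_bound_mult[OF _ _ _ norm_bound_transpose_P2, of _ k m] P1 P2 Q2 Ti xi by auto
qed

lemma norm_bound_R1: "norm_bound R1 (1 + sqrt (2 * \<xi>) / (1 - \<xi>))"
proof -
  have "R1 = transpose_mat P1 - (transpose_mat P1 - R1)"
    using P1 R1_carrier by (intro eq_matI) auto
  moreover have "transpose_mat P1 - R1 \<in> carrier_mat k n" using P1 R1_carrier by auto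
  ultimately show ?thesis
    using norm_bound_diff[OF _ _ norm_bound_transpose_P1 norm_bound_transpose_P1_minus_R1] P1 by auto
qed

lemma sigma_min_T: "0 < m \<Longrightarrow> 1 - \<xi> \<le> sigma_min T"
proof (rule sigma_min_geI)
  fix v assume "v \<in> carrier_vec (dim_col T)" "vnorm v = 1"
  thus "1 - \<xi> \<le> vnorm (T *\<^sub>v v)" using T_lower_bound[of v] Q2 by simp
qed (use Q2 in simp)

context
  fixes A :: "real mat"
  assumes A: "A \<in> carrier_mat n n" and invariant: "A * Q2 = Q2 * (R2 * A * Q2)"
begin

lemma norm_bound_compression: "norm_bound (R2 * A * Q2) (1 / (1 - \<xi>) * op_norm A)"
proof -
  have "norm_bound (R2 * A) (1 / (1 - \<xi>) * op_norm A)"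
    by (rule norm_bound_mult[OF R2_carrier A norm_bound_R2 norm_bound_op_norm]) (use xi in simp)
  moreover have "R2 * A \<in> carrier_mat m n" using R2_carrier A by auto
  ultimately show ?thesis
    using norm_bound_mult[OF _ Q2 _ norm_bound_orthonormal_cols[OF Q2 Q2_orth]] xi op_norm_nonneg[of A] by simp
qed

lemma norm_bound_upper_right_block:
  "norm_bound (transpose_mat P1 * A * P2) ((2 - \<xi>) / (1 - \<xi>) * sqrt (2 * \<xi>) * op_norm A)"
proof -
  have P1A: "transpose_mat P1 * A \<in> carrier_mat k n" using P1 A by auto
  have diff: "transpose_mat P1 * A * (P2 - Q2) = transpose_mat P1 * A * P2 - transpose_mat P1 * A * Q2"
    by (rule mult_minus_distrib_mat[OF P1A P2 Q2])
  have "transpose_mat P1 * A * Q2 = transpose_mat P1 * (Q2 * (R2 * A * Q2))"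
    using P1 A Q2 by (simp add: assoc_mult_mat[of _ k n _ n _ m] flip: invariant)
  also have "\<dots> = transpose_mat P1 * Q2 * (R2 * A * Q2)"
    using P1 Q2 R2_carrier A by (simp add: assoc_mult_mat[of _ k n _ m _ m])
  finally have "transpose_mat P1 * A * Q2 = transpose_mat P1 * Q2 * (R2 * A * Q2)" .
  moreover have "transpose_mat P1 * A * P2 = transpose_mat P1 * A * (P2 - Q2) + transpose_mat P1 * A * Q2"
    unfolding diff using P1A P2 Q2 by (intro eq_matI) auto
  ultimately have split: "transpose_mat P1 * A * P2 =
      transpose_mat P1 * A * (P2 - Q2) + transpose_mat P1 * Q2 * (R2 * A * Q2)" by simp
  have "norm_bound (transpose_mat P1 * A * (P2 - Q2)) (1 * op_norm A * sqrt (2 * \<xi>))"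
    by (rule norm_bound_mult[OF _ _ norm_bound_mult[OF _ A norm_bound_transpose_P1 norm_bound_op_norm]
          norm_bound_P2_minus_Q2]) (use P1 A P2 Q2 op_norm_nonneg[of A] in auto)
  moreover have "norm_bound (transpose_mat P1 * Q2 * (R2 * A * Q2)) (sqrt (2 * \<xi>) * (1 / (1 - \<xi>) * op_norm A))"
    by (rule norm_bound_mult[OF _ _ norm_bound_P1_Q2 norm_bound_compression]) (use P1 Q2 R2_carrier A xi in auto)
  ultimately have "norm_bound (transpose_mat P1 * A * P2)
      (1 * op_norm A * sqrt (2 * \<xi>) + sqrt (2 * \<xi>) * (1 / (1 - \<xi>) * op_norm A))"
    unfolding split by (rule norm_bound_add[rotated 2]) (use P1 A P2 Q2 R2_carrier in auto)
  moreover have "1 * op_norm A * sqrt (2 * \<xi>) + sqrt (2 * \<xi>) * (1 / (1 - \<xi>) * op_norm A) =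
      (2 - \<xi>) / (1 - \<xi>) * sqrt (2 * \<xi>) * op_norm A"
    using xi by (simp add: field_simps)
  ultimately show ?thesis by simp
qed

lemma block_inverse_estimates:
  assumes n: "n = k + m" and m: "0 < m"
  shows "\<exists>Qi. Qi \<in> carrier_mat n n \<and> Qi * hcat P1 Q2 = 1\<^sub>m n \<and> hcat P1 Q2 * Qi = 1\<^sub>m n \<and>
    1 - \<xi> \<le> sigma_min T \<and>
    op_norm (transpose_mat P1 * Q2) \<le> sqrt (2 * \<xi>) \<and>
    op_norm (P2 - Q2) \<le> sqrt (2 * \<xi>) \<and>
    op_norm (mat m n (\<lambda>(i, j). Qi $$ (i + k, j))) \<le> 1 / (1 - \<xi>) \<and>
    op_norm (mat m n (\<lambda>(i, j). Qi $$ (i + k, j)) * A * Q2) \<le> 1 / (1 - \<xi>) * op_norm A \<and>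
    op_norm (transpose_mat P1 - mat k n (\<lambda>(i, j). Qi $$ (i, j))) \<le> sqrt (2 * \<xi>) / (1 - \<xi>) \<and>
    op_norm (mat k n (\<lambda>(i, j). Qi $$ (i, j))) \<le> 1 + sqrt (2 * \<xi>) / (1 - \<xi>) \<and>
    op_norm (mat k m (\<lambda>(i, j). (transpose_mat (hcat P1 P2) * A * hcat P1 P2) $$ (i, j + k)))
      \<le> (2 - \<xi>) / (1 - \<xi>) * sqrt (2 * \<xi>) * op_norm A"
proof -
  have carrier: "R1 @\<^sub>r R2 \<in> carrier_mat n n" using carrier_append_rows[OF R1_carrier R2_carrier] n by simp
  note inverse = append_rows_hcat_inverse[OF R1_carrier R2_carrier P1 Q2 n R1_P1 R1_Q2 R2_P1 R2_Q2]
  note blocks = append_rows_upper_block[OF R1_carrier R2_carrier]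
    append_rows_lower_block[OF R1_carrier R2_carrier] hcat_conj_upper_right_block[OF P1 P2 A]
  have nonneg: "0 \<le> 1 / (1 - \<xi>) * op_norm A" "0 \<le> (2 - \<xi>) / (1 - \<xi>) * sqrt (2 * \<xi>) * op_norm A"
    using xi op_norm_nonneg[of A] by simp_all
  show ?thesis
    by (rule exI[of _ "R1 @\<^sub>r R2"], unfold blocks)
      (use carrier inverse sigma_min_T[OF m] xi op_norm_le_of_norm_bound[OF norm_bound_P1_Q2]
        op_norm_le_of_norm_bound[OF norm_bound_P2_minus_Q2] op_norm_le_of_norm_bound[OF norm_bound_R2]
        op_norm_le_of_norm_bound[OF norm_bound_compression nonneg(1)]
        op_norm_le_of_norm_bound[OF norm_bound_transpose_P1_minus_R1]
        op_norm_le_of_norm_bound[OF norm_bound_R1]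
        op_norm_le_of_norm_bound[OF norm_bound_upper_right_block nonneg(2)] in simp)
qed

end

end

lemma xi_close_coercive_frames:
  assumes P1: "onb_cols n k P1 U" and close: "xi_close n (orth_compl n U) V \<xi>" and xi: "0 < \<xi>" "\<xi> < 1"
  obtains P2 Q2 Ti where "onb_cols n (n - k) P2 (orth_compl n U)" "onb_cols n (n - k) Q2 V"
    "coercive_frames n k (n - k) P1 P2 Q2 Ti \<xi>"
proof -
  obtain d P2 Q where P2: "onb_cols n d P2 (orth_compl n U)" and Q: "onb_cols n d Q V"
    and sig: "1 - \<xi> < sigma_min (transpose_mat P2 * Q)"
    using close unfolding xi_close_def by blast
  have d: "d = n - k" using onb_orth_compl_dim[OF P1 P2] by simp
  have P1c: "P1 \<in> carrier_mat n k" and P1o: "transpose_mat P1 * P1 = 1\<^sub>m k"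
    and P2c: "P2 \<in> carrier_mat n d" and P2o: "transpose_mat P2 * P2 = 1\<^sub>m d"
    using P1 P2 unfolding onb_cols_def by auto
  obtain Q2 where Q2: "onb_cols n d Q2 V"
    and coercive: "\<forall>v \<in> carrier_vec d. (1 - \<xi>) * (v \<bullet> v) \<le> v \<bullet> ((transpose_mat P2 * Q2) *\<^sub>v v)"
    using exists_coercive_aligned_basis[OF P2c Q sig xi(2)] by (elim exE conjE)
  have Q2c: "Q2 \<in> carrier_mat n d" and Q2o: "transpose_mat Q2 * Q2 = 1\<^sub>m d"
    using Q2 unfolding onb_cols_def by auto
  have "transpose_mat P2 * Q2 \<in> carrier_mat d d" using P2c Q2c by auto
  from coercive_mat_invertible[OF this, of "1 - \<xi>"] coercive xi
  obtain Ti where Ti: "Ti \<in> carrier_mat d d" "Ti * (transpose_mat P2 * Q2) = 1\<^sub>m d" by auto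
  have "coercive_frames n k d P1 P2 Q2 Ti \<xi>"
    by (rule coercive_frames.intro)
      (use P1c P1o P2c P2o Q2c Q2o onb_orth_compl_cross_zero[OF P1 P2]
        onb_orth_compl_resolution[OF P1 P2] xi coercive Ti in auto)
  thus ?thesis using that P2 Q2 unfolding d by blast
qed

theorem mainTheorem5:
  fixes A P1 :: "real mat" and n k :: nat and lam :: "nat \<Rightarrow> complex" and \<xi> :: real
  assumes A: "A \<in> carrier_mat n n"
    and k: "0 < k" "k < n"
    and diag: "similar_mat (map_mat complex_of_real A)
                 (mat n n (\<lambda>(i, j). if i = j then lam i else 0))"
    and lam_dom: "cmod (lam 1) < cmod (lam 0)"
    and lam_ord: "\<forall>i j. i \<le> j \<and> j < n \<longrightarrow> cmod (lam j) \<le> cmod (lam i)"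
    and lam_k: "1 < cmod (lam (k - 1))" "cmod (lam k) < 1"
    and P1: "onb_cols n k P1 (unstable_space A)"
    and xi: "0 < \<xi>" "\<xi> < 1"
    and close: "xi_close n (orth_compl n (unstable_space A)) (stable_space A) \<xi>"
  shows "\<exists>P2 Q2. onb_cols n (n - k) P2 (orth_compl n (unstable_space A)) \<and>
                onb_cols n (n - k) Q2 (stable_space A) \<and>
    (let P = hcat P1 P2; M = transpose_mat P * A * P;
         \<Delta> = mat k (n - k) (\<lambda>(i, j). M $$ (i, j + k)); Q = hcat P1 Q2
     in \<exists>Qi. Qi \<in> carrier_mat n n \<and> Qi * Q = 1\<^sub>m n \<and> Q * Qi = 1\<^sub>m n \<and>
       (let R1 = mat k n (\<lambda>(i, j). Qi $$ (i, j));
            R2 = mat (n - k) n (\<lambda>(i, j). Qi $$ (i + k, j));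
            N2 = R2 * A * Q2
        in sigma_min (transpose_mat P2 * Q2) \<ge> 1 - \<xi> \<and>
           op_norm (transpose_mat P1 * Q2) \<le> sqrt (2 * \<xi>) \<and>
           op_norm (P2 - Q2) \<le> sqrt (2 * \<xi>) \<and>
           op_norm R2 \<le> 1 / (1 - \<xi>) \<and>
           op_norm N2 \<le> 1 / (1 - \<xi>) * op_norm A \<and>
           op_norm (transpose_mat P1 - R1) \<le> sqrt (2 * \<xi>) / (1 - \<xi>) \<and>
           op_norm R1 \<le> 1 + sqrt (2 * \<xi>) / (1 - \<xi>) \<and>
           op_norm \<Delta> \<le> (2 - \<xi>) / (1 - \<xi>) * sqrt (2 * \<xi>) * op_norm A))"
proof -
  obtain P2 Q2 Ti where P2: "onb_cols n (n - k) P2 (orth_compl n (unstable_space A))"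
    and Q2: "onb_cols n (n - k) Q2 (stable_space A)" and F: "coercive_frames n k (n - k) P1 P2 Q2 Ti \<xi>"
    using xi_close_coercive_frames[OF P1 close xi] .
  interpret F: coercive_frames n k "n - k" P1 P2 Q2 Ti \<xi> by (rule F)
  have invariant: "A * Q2 = Q2 * (F.R2 * A * Q2)"
    by (rule onb_cols_invariant_factor[OF Q2 A _ F.R2_carrier F.R2_Q2])
      (simp add: stable_space_def eig_real_space_mult_closed[OF A])
  have dims: "n = k + (n - k)" "0 < n - k" using k by auto
  note est = F.block_inverse_estimates[OF A invariant dims]
  show ?thesis
    unfolding Let_def by (rule exI[of _ P2], rule exI[of _ Q2], intro conjI P2 Q2 est)
qed

end
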